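(* Let $\boldsymbol\mu=\{\mu_t\}_{t>0}$ be a factorizing family over $[0,1]\times L$. For $s,t>0$ let $\Delta_{s,t}:=d\big((\mu_s\otimes\mu_t)\circ\oplus_{s,t}^{-1}\big)/d\mu_{s+t}$ and define $U_{s,t}$ on simple tensors $f\otimes g\in L^2(\mathscr C_s,\mu_s)\otimes L^2(\mathscr C_t,\mu_t)$ by $U_{s,t}(f\otimes g)(Z)=\Delta_{s,t}(Z)^{1/2}f(Z\cap([0,s]\times L))\,g\big((Z\cap([s,s+t]\times L))-(s,0)\big)$. Then each $U_{s,t}$ extends to a unitary $L^2(\mathscr C_s,\mu_s)\otimes L^2(\mathscr C_t,\mu_t)\to L^2(\mathscr C_{s+t},\mu_{s+t})$, and $U_{r,s+t}(\mathbf 1\otimes U_{s,t})=U_{r+s,t}(U_{r,s}\otimes\mathbf 1)$ for all $r,s,t>0$; i.e. $\{L^2(\mathscr C_t,\mu_t),U_{s,t}\}_{t>0}$ is an algebraic Arveson system.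
   Context: Let $L$ be a locally compact, second countable Hausdorff space. For $t>0$ let $\mathscr C_t$ be the space of closed subsets of $[0,t]\times L$ with the Borel $\sigma$-field of the Fell topology. For $s,t>0$, $\oplus_{s,t}:\mathscr C_s\times\mathscr C_t\to\mathscr C_{s+t}$, $\oplus_{s,t}(Z_1,Z_2)=Z_1\cup\{(s+r,\ell):(r,\ell)\in Z_2\}$; for a set $A$, $A-(s,0)=\{(r-s,\ell):(r,\ell)\in A\}$. A family $\{\mu_t\}_{t>0}$ of probability measures on $\mathscr C_t$ is a factorizing family over $[0,1]\times L$ if (i) $\mu_{s+t}$ and $(\mu_s\otimes\mu_t)\circ\oplus_{s,t}^{-1}$ are mutually absolutely continuous for all $s,t>0$, and (ii) $\mu_t(\{Z:Z\cap(\{r\}\times L)\neq\varnothing\})=0$ for all $t>0$, $r\in[0,t]$. *)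

theory Defs
  imports "HOL-Probability.Probability"
begin

definition fell_topology :: "'a topology \<Rightarrow> 'a set topology" where
  "fell_topology T = topology_generated_by
     ({ {F. closedin T F \<and> F \<inter> K = {}} | K. compactin T K } \<union>
      { {F. closedin T F \<and> F \<inter> G \<noteq> {}} | G. openin T G })"

definition borel_of_top :: "'a topology \<Rightarrow> 'a measure" where
  "borel_of_top T = sigma (topspace T) {U. openin T U}"

definition strip_top :: "'a topology \<Rightarrow> real \<Rightarrow> (real \<times> 'a) topology" where
  "strip_top X t = subtopology (prod_topology euclideanreal X) ({0..t} \<times> topspace X)"

definition Cspace :: "'a topology \<Rightarrow> real \<Rightarrow> (real \<times> 'a) set measure" where
  "Cspace X t = borel_of_top (fell_topology (strip_top X t))"

definition shift_set :: "real \<Rightarrow> (real \<times> 'a) set \<Rightarrow> (real \<times> 'a) set" where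
  "shift_set s A = (\<lambda>(r, l). (r - s, l)) ` A"

definition oplus :: "real \<Rightarrow> (real \<times> 'a) set \<Rightarrow> (real \<times> 'a) set \<Rightarrow> (real \<times> 'a) set" where
  "oplus s Z1 Z2 = Z1 \<union> (\<lambda>(r, l). (s + r, l)) ` Z2"

definition factorizing_family :: "'a topology \<Rightarrow> (real \<Rightarrow> (real \<times> 'a) set measure) \<Rightarrow> bool" where
  "factorizing_family X \<mu> \<longleftrightarrow>
     (\<forall>t>0. prob_space (\<mu> t) \<and> sets (\<mu> t) = sets (Cspace X t) \<and> space (\<mu> t) = space (Cspace X t)) \<and>
     (\<forall>s>0. \<forall>t>0.
        absolutely_continuous (\<mu> (s + t))
          (distr (\<mu> s \<Otimes>\<^sub>M \<mu> t) (Cspace X (s + t)) (\<lambda>(Z1, Z2). oplus s Z1 Z2)) \<and>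
        absolutely_continuous
          (distr (\<mu> s \<Otimes>\<^sub>M \<mu> t) (Cspace X (s + t)) (\<lambda>(Z1, Z2). oplus s Z1 Z2)) (\<mu> (s + t))) \<and>
     (\<forall>t>0. \<forall>r\<in>{0..t}.
        emeasure (\<mu> t) {Z \<in> space (\<mu> t). Z \<inter> ({r} \<times> topspace X) \<noteq> {}} = 0)"

definition Delta :: "'a topology \<Rightarrow> (real \<Rightarrow> (real \<times> 'a) set measure) \<Rightarrow> real \<Rightarrow> real
    \<Rightarrow> (real \<times> 'a) set \<Rightarrow> ennreal" where
  "Delta X \<mu> s t = RN_deriv (\<mu> (s + t))
     (distr (\<mu> s \<Otimes>\<^sub>M \<mu> t) (Cspace X (s + t)) (\<lambda>(Z1, Z2). oplus s Z1 Z2))"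

definition Uop :: "'a topology \<Rightarrow> (real \<Rightarrow> (real \<times> 'a) set measure) \<Rightarrow> real \<Rightarrow> real
    \<Rightarrow> ((real \<times> 'a) set \<Rightarrow> complex) \<Rightarrow> ((real \<times> 'a) set \<Rightarrow> complex)
    \<Rightarrow> (real \<times> 'a) set \<Rightarrow> complex" where
  "Uop X \<mu> s t f g Z =
     complex_of_real (sqrt (enn2real (Delta X \<mu> s t Z))) *
     f (Z \<inter> ({0..s} \<times> topspace X)) *
     g (shift_set s (Z \<inter> ({s..s + t} \<times> topspace X)))"

definition L2 :: "'b measure \<Rightarrow> ('b \<Rightarrow> complex) set" where
  "L2 M = {f. f \<in> borel_measurable M \<and> integrable M (\<lambda>x. (cmod (f x))\<^sup>2)}"

definition inner_L2 :: "'b measure \<Rightarrow> ('b \<Rightarrow> complex) \<Rightarrow> ('b \<Rightarrow> complex) \<Rightarrow> complex" where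
  "inner_L2 M f g = (\<integral>x. cnj (f x) * g x \<partial>M)"

end

theory Submission
  imports Defs
begin

text \<open>
  For a locally compact second countable Hausdorff space the Fell Borel field is generated by
  the ``miss'' sets \<open>{F. F \<inter> K = {}}\<close>, \<open>K\<close> compact. This makes the restrictions
  \<open>Z \<mapsto> Z \<inter> [0,s]\<times>L\<close>, \<open>Z \<mapsto> (Z \<inter> [s,s+t]\<times>L) - s\<close> and the concatenation \<open>\<oplus>\<^sub>s\<close>
  measurable. Since \<open>\<mu>\<^sub>t\<close> charges no vertical line, the two restrictions invert \<open>\<oplus>\<^sub>s\<close>
  almost surely, so \<open>Z \<mapsto> (Z \<inter> [0,s]\<times>L, (Z \<inter> [s,s+t]\<times>L) - s)\<close> turns
  \<open>\<integral> \<Delta>\<^sub>s\<^sub>,\<^sub>t \<phi>(\<dots>) d\<mu>\<^sub>s\<^sub>+\<^sub>t\<close> into \<open>\<integral> \<phi> d(\<mu>\<^sub>s \<otimes> \<mu>\<^sub>t)\<close>.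
  With Fubini this gives the isometry property of \<open>U\<^sub>s\<^sub>,\<^sub>t\<close>; totality of its range follows
  from the density of algebraic tensors in \<open>L\<^sup>2(\<mu>\<^sub>s \<otimes> \<mu>\<^sub>t)\<close>, transported back by the same
  change of variables. Associativity reduces to the cocycle identity
  \<open>\<Delta>\<^sub>r\<^sub>,\<^sub>s\<^sub>+\<^sub>t(Z) \<Delta>\<^sub>s\<^sub>,\<^sub>t(Z\<^sub>2) = \<Delta>\<^sub>r\<^sub>+\<^sub>s\<^sub>,\<^sub>t(Z) \<Delta>\<^sub>r\<^sub>,\<^sub>s(Z\<^sub>1)\<close>, which holds because both sides
  are finite densities, with respect to \<open>\<mu>\<^sub>r\<^sub>+\<^sub>s\<^sub>+\<^sub>t\<close>, of the image of \<open>\<mu>\<^sub>r \<otimes> \<mu>\<^sub>s \<otimes> \<mu>\<^sub>t\<close>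
  under the triple concatenation.
\<close>

section \<open>The Borel field of the Fell topology\<close>

definition fell_miss :: "'a topology \<Rightarrow> 'a set \<Rightarrow> 'a set set" where
  "fell_miss Y K = {F. closedin Y F \<and> F \<inter> K = {}}"

definition fell_hit :: "'a topology \<Rightarrow> 'a set \<Rightarrow> 'a set set" where
  "fell_hit Y G = {F. closedin Y F \<and> F \<inter> G \<noteq> {}}"

abbreviation fell_subbasis :: "'a topology \<Rightarrow> 'a set set set" where
  "fell_subbasis Y \<equiv> {fell_miss Y K | K. compactin Y K} \<union> {fell_hit Y G | G. openin Y G}"

lemma fell_topology_eq: "fell_topology Y = topology_generated_by (fell_subbasis Y)"
  by (simp add: fell_topology_def fell_miss_def fell_hit_def)

lemma topspace_fell_topology: "topspace (fell_topology Y) = {F. closedin Y F}"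
proof -
  have "fell_miss Y {} = {F. closedin Y F}"
    by (auto simp: fell_miss_def)
  moreover have "fell_miss Y {} \<in> fell_subbasis Y"
    by auto
  moreover have "A \<subseteq> {F. closedin Y F}" if "A \<in> fell_subbasis Y" for A
    using that unfolding fell_miss_def fell_hit_def by blast
  ultimately show ?thesis
    unfolding fell_topology_eq topology_generated_by_topspace by blast
qed

lemma openin_fell_miss: "compactin Y K \<Longrightarrow> openin (fell_topology Y) (fell_miss Y K)"
  unfolding fell_topology_eq by (rule topology_generated_by_Basis) blast

lemma space_borel_of_top: "space (borel_of_top T) = topspace T"
  unfolding borel_of_top_def by (simp add: space_measure_of_conv)

lemma sets_borel_of_top: "sets (borel_of_top T) = sigma_sets (topspace T) {U. openin T U}"
  unfolding borel_of_top_def by (rule sets_measure_of) (auto dest: openin_subset)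

lemma sets_borel_of_top_openin: "openin T U \<Longrightarrow> U \<in> sets (borel_of_top T)"
  unfolding sets_borel_of_top by auto

lemma fell_hit_eq_compl_miss: "fell_hit Y K = {F. closedin Y F} - fell_miss Y K"
  unfolding fell_miss_def fell_hit_def by blast

lemma generate_topology_on_finite_Inter:
  assumes "generate_topology_on S U" "x \<in> U"
  shows "\<exists>A. finite A \<and> A \<subseteq> S \<and> x \<in> \<Inter>A \<and> \<Inter>A \<subseteq> U \<and> A \<noteq> {}"
  using assms
proof (induction arbitrary: x rule: generate_topology_on.induct)
  case Empty then show ?case by simp
next
  case (Int a b)
  from Int.prems have xa: "x \<in> a" and xb: "x \<in> b" by auto
  obtain A where A: "finite A" "A \<subseteq> S" "x \<in> \<Inter>A" "\<Inter>A \<subseteq> a" "A \<noteq> {}"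
    using Int.IH(1)[OF xa] by blast
  obtain B where B: "finite B" "B \<subseteq> S" "x \<in> \<Inter>B" "\<Inter>B \<subseteq> b" "B \<noteq> {}"
    using Int.IH(2)[OF xb] by blast
  have "finite (A \<union> B)" "A \<union> B \<subseteq> S" "x \<in> \<Inter>(A \<union> B)" "A \<union> B \<noteq> {}"
    using A B by auto
  moreover have "\<Inter>(A \<union> B) \<subseteq> a \<inter> b" using A(4) B(4) by auto
  ultimately show ?case by blast
next
  case (UN K)
  then obtain k where k: "k \<in> K" "x \<in> k" by auto
  obtain A where A: "finite A" "A \<subseteq> S" "x \<in> \<Inter>A" "\<Inter>A \<subseteq> k" "A \<noteq> {}"
    using UN.IH[OF k] by blast
  have "\<Inter>A \<subseteq> \<Union>K" using A(4) k(1) by auto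
  then show ?case using A by blast
next
  case (Basis s)
  have "finite {s}" "{s} \<subseteq> S" "x \<in> \<Inter>{s}" "\<Inter>{s} \<subseteq> s" "{s} \<noteq> {}" using Basis by auto
  then show ?case by blast
qed

lemma fell_miss_Un: "fell_miss Y K1 \<inter> fell_miss Y K2 = fell_miss Y (K1 \<union> K2)"
  unfolding fell_miss_def by blast

lemma fell_subbasis_Inter_eq:
  assumes "finite A" "A \<noteq> {}" "A \<subseteq> fell_subbasis Y"
  shows "\<exists>K Gs. compactin Y K \<and> finite Gs \<and> (\<forall>g\<in>Gs. openin Y g) \<and>
            \<Inter>A = fell_miss Y K \<inter> (\<Inter>g\<in>Gs. fell_hit Y g)"
  using assms
proof (induction rule: finite_ne_induct)
  case (singleton a)
  then have "a \<in> fell_subbasis Y" by simp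
  then have "a \<in> {fell_miss Y K | K. compactin Y K} \<or> a \<in> {fell_hit Y G | G. openin Y G}" by (rule UnE) simp_all
  then show ?case
  proof
    assume "a \<in> {fell_miss Y K | K. compactin Y K}"
    then obtain K where K: "compactin Y K" "a = fell_miss Y K" by blast
    have "\<Inter>{a} = fell_miss Y K \<inter> (\<Inter>g\<in>{}. fell_hit Y g)" using K by simp
    then show ?case using K(1) by blast
  next
    assume "a \<in> {fell_hit Y G | G. openin Y G}"
    then obtain G where G: "openin Y G" "a = fell_hit Y G" by blast
    have "fell_hit Y G \<subseteq> fell_miss Y {}" unfolding fell_hit_def fell_miss_def by blast
    then have "\<Inter>{a} = fell_miss Y {} \<inter> (\<Inter>g\<in>{G}. fell_hit Y g)" using G by (simp add: Int_absorb1)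
    then show ?case using G(1) by (metis compactin_empty finite.emptyI finite.insertI singletonD)
  qed
next
  case (insert a A)
  have "A \<subseteq> fell_subbasis Y"
    using insert.prems by (rule subset_trans[rotated]) blast
  from insert.IH[OF this] obtain K Gs where KG: "compactin Y K" "finite Gs" "\<forall>g\<in>Gs. openin Y g"
    "\<Inter>A = fell_miss Y K \<inter> (\<Inter>g\<in>Gs. fell_hit Y g)" by metis
  have "a \<in> fell_subbasis Y" using insert.prems by (rule subsetD) simp
  then have "a \<in> {fell_miss Y K | K. compactin Y K} \<or> a \<in> {fell_hit Y G | G. openin Y G}" by (rule UnE) simp_all
  then show ?case
  proof
    assume "a \<in> {fell_miss Y K | K. compactin Y K}"
    then obtain K' where K': "compactin Y K'" "a = fell_miss Y K'" by blast
    have "\<Inter>(insert a A) = fell_miss Y (K' \<union> K) \<inter> (\<Inter>g\<in>Gs. fell_hit Y g)"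
      using K' KG(4) by (simp add: Int_assoc[symmetric] fell_miss_Un)
    moreover have "compactin Y (K' \<union> K)" using K'(1) KG(1) by (rule compactin_Un)
    ultimately show ?case using KG(2,3) by blast
  next
    assume "a \<in> {fell_hit Y G | G. openin Y G}"
    then obtain G where G: "openin Y G" "a = fell_hit Y G" by blast
    have "\<Inter>(insert a A) = fell_miss Y K \<inter> (\<Inter>g\<in>insert G Gs. fell_hit Y g)"
      using G KG(4) by (simp add: Int_ac)
    moreover have "finite (insert G Gs)" "\<forall>g\<in>insert G Gs. openin Y g" using KG(2,3) G(1) by simp_all
    ultimately show ?case using KG(1) by blast
  qed
qed

definition relcompact_base :: "'a topology \<Rightarrow> 'a set set \<Rightarrow> bool" where
  "relcompact_base Y B \<longleftrightarrow> countable B \<and>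
     (\<forall>b\<in>B. openin Y b \<and> compactin Y (Y closure_of b)) \<and>
     (\<forall>W x. openin Y W \<and> x \<in> W \<longrightarrow> (\<exists>b\<in>B. x \<in> b \<and> Y closure_of b \<subseteq> W))"

lemma relcompact_baseD:
  assumes "relcompact_base Y B"
  shows "countable B" "\<And>b. b \<in> B \<Longrightarrow> openin Y b" "\<And>b. b \<in> B \<Longrightarrow> compactin Y (Y closure_of b)"
    "\<And>b. b \<in> B \<Longrightarrow> b \<subseteq> Y closure_of b"
    "\<And>W x. openin Y W \<Longrightarrow> x \<in> W \<Longrightarrow> \<exists>b\<in>B. x \<in> b \<and> Y closure_of b \<subseteq> W"
  using assms closure_of_subset openin_subset unfolding relcompact_base_def by metis+

lemma relcompact_base_exists:
  assumes "locally_compact_space Y" "second_countable Y" "Hausdorff_space Y"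
  obtains B where "relcompact_base Y B"
proof -
  obtain B0 where B0: "countable B0" "\<forall>V\<in>B0. openin Y V"
    "\<forall>U x. openin Y U \<and> x \<in> U \<longrightarrow> (\<exists>V\<in>B0. x \<in> V \<and> V \<subseteq> U)"
    using assms(2) unfolding second_countable_def by metis
  have nb: "neighbourhood_base_of (\<lambda>C. compactin Y C \<and> closedin Y C) Y"
    using assms locally_compact_space_neighbourhood_base_closedin by blast
  define B where "B = {b\<in>B0. compactin Y (Y closure_of b)}"
  have "\<exists>b\<in>B. x \<in> b \<and> Y closure_of b \<subseteq> W" if "openin Y W" "x \<in> W" for W x
  proof -
    have "\<exists>U V. openin Y U \<and> (compactin Y V \<and> closedin Y V) \<and> x \<in> U \<and> U \<subseteq> V \<and> V \<subseteq> W"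
      using nb that unfolding neighbourhood_base_of by simp
    then obtain U V where UV: "openin Y U" "compactin Y V" "closedin Y V" "x \<in> U" "U \<subseteq> V" "V \<subseteq> W"
      by metis
    then obtain b where b: "b \<in> B0" "x \<in> b" "b \<subseteq> U"
      using B0(3) by metis
    have cl: "Y closure_of b \<subseteq> V"
      using b(3) UV by (intro closure_of_minimal) auto
    then have "compactin Y (Y closure_of b)"
      using closed_compactin[OF UV(2)] by simp
    with b cl UV(6) show ?thesis
      unfolding B_def by blast
  qed
  then have "relcompact_base Y B"
    using B0 unfolding relcompact_base_def B_def by auto
  then show ?thesis
    by (rule that)
qed

abbreviation fell_miss_sets :: "'a topology \<Rightarrow> 'a set set set" where
  "fell_miss_sets Y \<equiv> sigma_sets {F. closedin Y F} {fell_miss Y K | K. compactin Y K}"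

lemma sigma_algebra_fell_miss_sets: "sigma_algebra {F. closedin Y F} (fell_miss_sets Y)"
  by (rule sigma_algebra_sigma_sets) (auto simp: fell_miss_def)

lemma fell_miss_in_fell_miss_sets: "compactin Y K \<Longrightarrow> fell_miss Y K \<in> fell_miss_sets Y"
  by (rule sigma_sets.Basic) blast

lemma fell_hit_compact_in_fell_miss_sets: "compactin Y K \<Longrightarrow> fell_hit Y K \<in> fell_miss_sets Y"
  unfolding fell_hit_eq_compl_miss by (intro sigma_sets.Compl fell_miss_in_fell_miss_sets)

lemma fell_hit_open_in_fell_miss_sets:
  assumes B: "relcompact_base Y B" and G: "openin Y G"
  shows "fell_hit Y G \<in> fell_miss_sets Y"
proof -
  have "fell_hit Y G = \<Union>((\<lambda>b. fell_hit Y (Y closure_of b)) ` {b\<in>B. Y closure_of b \<subseteq> G})"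
  proof (intro equalityI subsetI)
    fix F assume "F \<in> fell_hit Y G"
    then obtain y where F: "closedin Y F" "y \<in> F" "y \<in> G"
      by (auto simp: fell_hit_def)
    then obtain b where "b \<in> B" "y \<in> b" "Y closure_of b \<subseteq> G"
      using relcompact_baseD(5)[OF B G] by metis
    with F relcompact_baseD(4)[OF B] show "F \<in> \<Union>((\<lambda>b. fell_hit Y (Y closure_of b)) ` {b\<in>B. Y closure_of b \<subseteq> G})"
      unfolding fell_hit_def by blast
  qed (auto simp: fell_hit_def)
  also have "\<dots> \<in> fell_miss_sets Y"
    using relcompact_baseD(1,3)[OF B]
    by (auto intro!: sigma_sets_UNION fell_hit_compact_in_fell_miss_sets)
  finally show ?thesis .
qed

definition fell_basic :: "'a topology \<Rightarrow> 'a set set \<Rightarrow> 'a set set \<Rightarrow> 'a set set" where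
  "fell_basic Y Ks Gs = fell_miss Y (\<Union>b\<in>Ks. Y closure_of b) \<inter> (\<Inter>G\<in>Gs. fell_hit Y G)"

lemma fell_basic_in_fell_miss_sets:
  assumes B: "relcompact_base Y B" and "finite Ks" "Ks \<subseteq> B" "finite Gs" "Gs \<subseteq> B"
  shows "fell_basic Y Ks Gs \<in> fell_miss_sets Y"
  using \<open>finite Gs\<close> \<open>Gs \<subseteq> B\<close>
proof (induction Gs rule: finite_induct)
  case empty
  have "compactin Y (\<Union>b\<in>Ks. Y closure_of b)"
    using assms relcompact_baseD(3)[OF B] by (intro compactin_Union) auto
  then show ?case
    unfolding fell_basic_def by (simp add: fell_miss_in_fell_miss_sets)
next
  case (insert G Gs)
  interpret S: sigma_algebra "{F. closedin Y F}" "fell_miss_sets Y"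
    by (rule sigma_algebra_fell_miss_sets)
  have "fell_basic Y Ks (insert G Gs) = fell_basic Y Ks Gs \<inter> fell_hit Y G"
    unfolding fell_basic_def by blast
  also have "\<dots> \<in> fell_miss_sets Y"
    using insert relcompact_baseD(2)[OF B]
    by (intro S.Int fell_hit_open_in_fell_miss_sets[OF B]) auto
  finally show ?case .
qed

lemma relcompact_base_inside:
  assumes B: "relcompact_base Y B" and "openin Y G" "F \<inter> G \<noteq> {}"
  obtains b where "b \<in> B" "b \<subseteq> G" "F \<inter> b \<noteq> {}"
proof -
  obtain y where y: "y \<in> F" "y \<in> G"
    using assms(3) by blast
  then obtain b where b: "b \<in> B" "y \<in> b" "Y closure_of b \<subseteq> G"
    using relcompact_baseD(5)[OF B assms(2)] by metis
  then show ?thesis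
    using that relcompact_baseD(4)[OF B b(1)] y by blast
qed

lemma relcompact_base_cover_avoiding:
  assumes B: "relcompact_base Y B" and F: "closedin Y F" and K: "compactin Y K" "F \<inter> K = {}"
  obtains Ks where "finite Ks" "Ks \<subseteq> B" "\<forall>b\<in>Ks. Y closure_of b \<inter> F = {}"
    "K \<subseteq> (\<Union>b\<in>Ks. Y closure_of b)"
proof -
  have "K \<subseteq> \<Union>{b\<in>B. Y closure_of b \<inter> F = {}}"
  proof
    fix y assume "y \<in> K"
    then have y: "y \<in> topspace Y - F"
      using K compactin_subset_topspace by blast
    have "openin Y (topspace Y - F)"
      using F by blast
    then obtain b where "b \<in> B" "y \<in> b" "Y closure_of b \<subseteq> topspace Y - F"
      using relcompact_baseD(5)[OF B] y by metis
    then show "y \<in> \<Union>{b\<in>B. Y closure_of b \<inter> F = {}}"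
      by blast
  qed
  then have "\<exists>Ks. finite Ks \<and> Ks \<subseteq> {b\<in>B. Y closure_of b \<inter> F = {}} \<and> K \<subseteq> \<Union>Ks"
    using K relcompact_baseD(2)[OF B] unfolding compactin_def by (metis (no_types, lifting) mem_Collect_eq)
  then obtain Ks where Ks: "finite Ks" "Ks \<subseteq> {b\<in>B. Y closure_of b \<inter> F = {}}" "K \<subseteq> \<Union>Ks"
    by metis
  have "Ks \<subseteq> B" "\<forall>b\<in>Ks. Y closure_of b \<inter> F = {}"
    using Ks(2) by auto
  moreover have "K \<subseteq> (\<Union>b\<in>Ks. Y closure_of b)"
    using Ks(2,3) relcompact_baseD(4)[OF B] by blast
  ultimately show ?thesis
    by (rule that[OF Ks(1)])
qed

lemma fell_open_basic_neighbourhood: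
  assumes B: "relcompact_base Y B" and U: "openin (fell_topology Y) U" and "F \<in> U"
  obtains Ks Gs where "finite Ks" "Ks \<subseteq> B" "finite Gs" "Gs \<subseteq> B"
    "F \<in> fell_basic Y Ks Gs" "fell_basic Y Ks Gs \<subseteq> U"
proof -
  have F: "closedin Y F"
    using openin_subset[OF U] \<open>F \<in> U\<close> by (auto simp: topspace_fell_topology)
  have "generate_topology_on (fell_subbasis Y) U"
    using U unfolding fell_topology_eq by (rule openin_topology_generated_by)
  from generate_topology_on_finite_Inter[OF this \<open>F \<in> U\<close>] obtain A
    where A: "finite A" "A \<subseteq> fell_subbasis Y" "F \<in> \<Inter>A" "\<Inter>A \<subseteq> U" "A \<noteq> {}"
    by blast
  then obtain K Gs where K: "compactin Y K" and Gs: "finite Gs" "\<forall>G\<in>Gs. openin Y G"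
    and A_eq: "\<Inter>A = fell_miss Y K \<inter> (\<Inter>G\<in>Gs. fell_hit Y G)"
    using fell_subbasis_Inter_eq[OF A(1,5,2)] by blast
  have FK: "F \<inter> K = {}" and FG: "\<And>G. G \<in> Gs \<Longrightarrow> F \<inter> G \<noteq> {}"
    using A(3) unfolding A_eq fell_miss_def fell_hit_def by blast+
  have "\<exists>b. b \<in> B \<and> b \<subseteq> G \<and> F \<inter> b \<noteq> {}" if "G \<in> Gs" for G
    using relcompact_base_inside[OF B _ FG[OF that]] Gs(2) that by metis
  then obtain inner where inner: "\<And>G. G \<in> Gs \<Longrightarrow> inner G \<in> B \<and> inner G \<subseteq> G \<and> F \<inter> inner G \<noteq> {}"
    by metis
  obtain Ks where Ks: "finite Ks" "Ks \<subseteq> B" "\<forall>b\<in>Ks. Y closure_of b \<inter> F = {}"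
    "K \<subseteq> (\<Union>b\<in>Ks. Y closure_of b)"
    using relcompact_base_cover_avoiding[OF B F K FK] by metis
  have "fell_basic Y Ks (inner ` Gs) \<subseteq> U"
  proof
    fix F' assume "F' \<in> fell_basic Y Ks (inner ` Gs)"
    then have F': "closedin Y F'" "F' \<inter> (\<Union>b\<in>Ks. Y closure_of b) = {}"
      "\<And>G. G \<in> Gs \<Longrightarrow> F' \<inter> inner G \<noteq> {}"
      unfolding fell_basic_def fell_miss_def fell_hit_def by auto
    have "F' \<inter> K = {}"
      using F'(2) Ks(4) by blast
    moreover have "F' \<inter> G \<noteq> {}" if "G \<in> Gs" for G
      using F'(3)[OF that] inner[OF that] by blast
    ultimately have "F' \<in> \<Inter>A"
      using F'(1) unfolding A_eq fell_miss_def fell_hit_def by blast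
    then show "F' \<in> U"
      using A(4) by blast
  qed
  moreover have "F \<in> fell_basic Y Ks (inner ` Gs)"
  proof -
    have "F \<inter> (\<Union>b\<in>Ks. Y closure_of b) = {}"
      using Ks(3) by blast
    moreover have "\<forall>G\<in>inner ` Gs. F \<inter> G \<noteq> {}"
      using inner by blast
    ultimately show ?thesis
      unfolding fell_basic_def fell_miss_def fell_hit_def using F by auto
  qed
  moreover have "inner ` Gs \<subseteq> B"
    using inner by blast
  ultimately show ?thesis
    using Ks(1,2) Gs(1) by (intro that[of Ks "inner ` Gs"]) auto
qed

lemma fell_open_in_fell_miss_sets:
  assumes B: "relcompact_base Y B" and U: "openin (fell_topology Y) U"
  shows "U \<in> fell_miss_sets Y"
proof -
  define I where "I = {(Ks, Gs). finite Ks \<and> Ks \<subseteq> B \<and> finite Gs \<and> Gs \<subseteq> B \<and> fell_basic Y Ks Gs \<subseteq> U}"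
  have "countable I"
  proof (rule countable_subset)
    show "I \<subseteq> {A. finite A \<and> A \<subseteq> B} \<times> {A. finite A \<and> A \<subseteq> B}"
      unfolding I_def by blast
  qed (use countable_Collect_finite_subset[OF relcompact_baseD(1)[OF B]] in simp)
  moreover have "U = \<Union>((\<lambda>(Ks, Gs). fell_basic Y Ks Gs) ` I)"
  proof (intro equalityI subsetI)
    fix F assume "F \<in> U"
    then obtain Ks Gs where "finite Ks" "Ks \<subseteq> B" "finite Gs" "Gs \<subseteq> B"
      "F \<in> fell_basic Y Ks Gs" "fell_basic Y Ks Gs \<subseteq> U"
      using fell_open_basic_neighbourhood[OF B U] by metis
    then show "F \<in> \<Union>((\<lambda>(Ks, Gs). fell_basic Y Ks Gs) ` I)"
      unfolding I_def by blast
  qed (auto simp: I_def)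
  moreover have "(\<lambda>(Ks, Gs). fell_basic Y Ks Gs) i \<in> fell_miss_sets Y" if "i \<in> I" for i
    using that fell_basic_in_fell_miss_sets[OF B] unfolding I_def by auto
  ultimately show ?thesis
    by (metis (no_types, lifting) countable_image imageE sigma_sets_UNION)
qed

lemma sets_borel_fell_topology:
  assumes "locally_compact_space Y" "second_countable Y" "Hausdorff_space Y"
  shows "sets (borel_of_top (fell_topology Y)) = fell_miss_sets Y"
proof -
  obtain B where B: "relcompact_base Y B"
    using relcompact_base_exists[OF assms] .
  have "sigma_sets {F. closedin Y F} {U. openin (fell_topology Y) U} \<subseteq> fell_miss_sets Y"
    using fell_open_in_fell_miss_sets[OF B]
    by (intro sigma_algebra.sigma_sets_subset[OF sigma_algebra_fell_miss_sets]) blast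
  moreover have "sigma_sets (space (borel_of_top (fell_topology Y))) {fell_miss Y K | K. compactin Y K}
      \<subseteq> sets (borel_of_top (fell_topology Y))"
    using openin_fell_miss sets_borel_of_top_openin by (intro sets.sigma_sets_subset) blast
  ultimately show ?thesis
    unfolding sets_borel_of_top space_borel_of_top topspace_fell_topology by (rule equalityI)
qed

lemma fell_hit_closed_in_sets_borel:
  assumes "locally_compact_space Y" "second_countable Y" "Hausdorff_space Y" and C: "closedin Y C"
  shows "fell_hit Y C \<in> sets (borel_of_top (fell_topology Y))"
proof -
  obtain B where B: "relcompact_base Y B"
    using relcompact_base_exists[OF assms(1-3)] .
  have "fell_hit Y C = \<Union>((\<lambda>b. fell_hit Y (C \<inter> Y closure_of b)) ` B)"
  proof (intro equalityI subsetI)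
    fix F assume "F \<in> fell_hit Y C"
    then obtain y where F: "closedin Y F" "y \<in> F" "y \<in> C"
      by (auto simp: fell_hit_def)
    then obtain b where "b \<in> B" "y \<in> b"
      using relcompact_baseD(5)[OF B openin_topspace] closedin_subset[OF C] by blast
    with F relcompact_baseD(4)[OF B] show "F \<in> \<Union>((\<lambda>b. fell_hit Y (C \<inter> Y closure_of b)) ` B)"
      unfolding fell_hit_def by blast
  qed (auto simp: fell_hit_def)
  also have "\<dots> \<in> fell_miss_sets Y"
    using relcompact_baseD(1,3)[OF B] closed_Int_compactin[OF C]
    by (auto intro!: sigma_sets_UNION fell_hit_compact_in_fell_miss_sets)
  finally show ?thesis
    using sets_borel_fell_topology[OF assms(1-3)] by simp
qed

lemma second_countable_euclidean: "second_countable (euclidean :: 'a::second_countable_topology topology)"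
proof -
  obtain B :: "'a set set" where B: "countable B" "\<And>C. C \<in> B \<Longrightarrow> open C"
    "\<And>S. open S \<Longrightarrow> \<exists>U. U \<subseteq> B \<and> S = \<Union>U"
    by (rule univ_second_countable) blast
  have "\<exists>V\<in>B. x \<in> V \<and> V \<subseteq> U" if U: "open U" "x \<in> U" for U x
  proof -
    obtain W where "W \<subseteq> B" "U = \<Union>W" using B(3)[OF U(1)] by blast
    then show ?thesis using U(2) by blast
  qed
  then show ?thesis unfolding second_countable_def using B(1,2) by (intro exI[of _ B]) simp
qed

lemma second_countable_prod_topology:
  assumes "second_countable A" "second_countable B"
  shows "second_countable (prod_topology A B)"
proof -
  obtain BA where BA: "countable BA" "\<forall>V\<in>BA. openin A V"
    "\<forall>U x. openin A U \<and> x \<in> U \<longrightarrow> (\<exists>V\<in>BA. x \<in> V \<and> V \<subseteq> U)"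
    using assms(1) unfolding second_countable_def by blast
  obtain BB where BB: "countable BB" "\<forall>V\<in>BB. openin B V"
    "\<forall>U x. openin B U \<and> x \<in> U \<longrightarrow> (\<exists>V\<in>BB. x \<in> V \<and> V \<subseteq> U)"
    using assms(2) unfolding second_countable_def by blast
  define BP where "BP = (\<lambda>(U, V). U \<times> V) ` (BA \<times> BB)"
  have c: "countable BP" unfolding BP_def using BA(1) BB(1) by simp
  have o: "\<forall>W\<in>BP. openin (prod_topology A B) W"
    unfolding BP_def using BA(2) BB(2) by (auto simp: openin_prod_Times_iff)
  have n: "\<exists>W\<in>BP. p \<in> W \<and> W \<subseteq> S" if S: "openin (prod_topology A B) S" "p \<in> S" for S p
  proof -
    obtain x y where p: "p = (x, y)" by fastforce
    have "\<forall>x y. (x, y) \<in> S \<longrightarrow> (\<exists>U V. openin A U \<and> openin B V \<and> x \<in> U \<and> y \<in> V \<and> U \<times> V \<subseteq> S)"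
      using S(1) by (simp only: openin_prod_topology_alt)
    then have "\<exists>U V. openin A U \<and> openin B V \<and> x \<in> U \<and> y \<in> V \<and> U \<times> V \<subseteq> S"
      using S(2) p by simp
    then obtain U V where UV: "openin A U" "openin B V" "x \<in> U" "y \<in> V" "U \<times> V \<subseteq> S"
      by blast
    have "\<exists>U'\<in>BA. x \<in> U' \<and> U' \<subseteq> U" using BA(3) UV(1,3) by simp
    then obtain U' where U': "U' \<in> BA" "x \<in> U'" "U' \<subseteq> U" by blast
    have "\<exists>V'\<in>BB. y \<in> V' \<and> V' \<subseteq> V" using BB(3) UV(2,4) by simp
    then obtain V' where V': "V' \<in> BB" "y \<in> V'" "V' \<subseteq> V" by blast
    have "U' \<times> V' \<in> BP" unfolding BP_def using U'(1) V'(1) by blast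
    moreover have "p \<in> U' \<times> V'" using p U'(2) V'(2) by simp
    moreover have "U' \<times> V' \<subseteq> S" using Sigma_mono[OF U'(3) V'(3)] UV(5) by (rule subset_trans)
    ultimately show ?thesis by (intro bexI[of _ "U' \<times> V'"] conjI)
  qed
  show ?thesis unfolding second_countable_def using c o n by blast
qed

abbreviation ambient :: "'a topology \<Rightarrow> (real \<times> 'a) topology" where
  "ambient X \<equiv> prod_topology euclideanreal X"

definition slab :: "'a topology \<Rightarrow> real \<Rightarrow> (real \<times> 'a) set" where
  "slab X t = {0..t} \<times> topspace X"

lemma strip_top_eq: "strip_top X t = subtopology (ambient X) (slab X t)"
  by (simp add: strip_top_def slab_def)

lemma closedin_slab: "closedin (ambient X) (slab X t)"
  unfolding slab_def closedin_prod_Times_iff by simp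

lemma closedin_strip: "closedin (strip_top X t) F \<longleftrightarrow> closedin (ambient X) F \<and> F \<subseteq> slab X t"
  unfolding strip_top_eq by (rule closedin_closed_subtopology[OF closedin_slab])

lemma compactin_strip: "compactin (strip_top X t) K \<longleftrightarrow> compactin (ambient X) K \<and> K \<subseteq> slab X t"
  unfolding strip_top_eq by (rule compactin_subtopology)

lemma slab_mono: "0 \<le> t \<Longrightarrow> slab X s \<subseteq> slab X (s + t)"
  unfolding slab_def by auto

lemma locally_compact_space_strip_top:
  "locally_compact_space X \<Longrightarrow> locally_compact_space (strip_top X t)"
  unfolding strip_top_eq
  by (rule locally_compact_space_closed_subset[OF _ closedin_slab])
    (simp add: locally_compact_space_prod_topology locally_compact_space_euclidean)

lemma second_countable_strip_top: "second_countable X \<Longrightarrow> second_countable (strip_top X t)"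
  unfolding strip_top_eq
  by (intro second_countable_subtopology second_countable_prod_topology second_countable_euclidean)

lemma Hausdorff_space_strip_top: "Hausdorff_space X \<Longrightarrow> Hausdorff_space (strip_top X t)"
  unfolding strip_top_eq by (intro Hausdorff_space_subtopology) (simp add: Hausdorff_space_prod_topology)

lemma space_Cspace: "space (Cspace X t) = {F. closedin (strip_top X t) F}"
  by (simp add: Cspace_def space_borel_of_top topspace_fell_topology)

lemma fell_miss_in_sets_Cspace: "compactin (strip_top X t) K \<Longrightarrow> fell_miss (strip_top X t) K \<in> sets (Cspace X t)"
  unfolding Cspace_def by (rule sets_borel_of_top_openin[OF openin_fell_miss])

lemma measurable_CspaceI:
  assumes lc: "locally_compact_space X" and sc: "second_countable X" and H: "Hausdorff_space X"
    and cl: "\<And>x. x \<in> space M \<Longrightarrow> closedin (strip_top X t) (f x)"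
    and pre: "\<And>K. compactin (strip_top X t) K \<Longrightarrow> {x\<in>space M. f x \<inter> K = {}} \<in> sets M"
  shows "f \<in> measurable M (Cspace X t)"
proof -
  let ?Y = "strip_top X t"
  let ?O = "{F. closedin ?Y F}" and ?G = "{fell_miss ?Y K | K. compactin ?Y K}"
  have gen_sub: "?G \<subseteq> Pow ?O" unfolding fell_miss_def by blast
  have "sets (Cspace X t) = sigma_sets ?O ?G"
    unfolding Cspace_def using sets_borel_fell_topology[OF locally_compact_space_strip_top[OF lc]
      second_countable_strip_top[OF sc] Hausdorff_space_strip_top[OF H]] .
  also have "\<dots> = sets (sigma ?O ?G)" using gen_sub by simp
  finally have eq: "measurable M (Cspace X t) = measurable M (sigma ?O ?G)"
    by (rule measurable_cong_sets[OF refl])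
  show ?thesis unfolding eq
  proof (rule measurable_measure_of[OF gen_sub])
    show "f \<in> space M \<rightarrow> ?O" using cl by blast
  next
    fix y assume "y \<in> ?G"
    then obtain K where K: "compactin ?Y K" "y = fell_miss ?Y K" by blast
    have "f -` y \<inter> space M = {x\<in>space M. f x \<inter> K = {}}"
      using K(2) cl unfolding fell_miss_def by blast
    then show "f -` y \<inter> space M \<in> sets M" using pre[OF K(1)] by simp
  qed
qed

definition translate :: "real \<Rightarrow> real \<times> 'a \<Rightarrow> real \<times> 'a" where
  "translate a = (\<lambda>(r, l). (a + r, l))"

lemma translate_Pair[simp]: "translate a (r, l) = (a + r, l)" by (simp add: translate_def)

lemma translate_translate[simp]: "translate a (translate b p) = translate (a + b) p"
  by (cases p) simp

lemma translate_0[simp]: "translate 0 p = p"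
  by (cases p) simp

lemma oplus_eq_translate: "oplus s Z1 Z2 = Z1 \<union> translate s ` Z2"
  by (simp add: oplus_def translate_def)

lemma shift_set_eq_translate: "shift_set s A = translate (- s) ` A"
proof -
  have "(\<lambda>(r, l). (r - s, l)) = (translate (- s) :: real \<times> 'a \<Rightarrow> real \<times> 'a)"
    by (simp add: fun_eq_iff split_def translate_def)
  then show ?thesis unfolding shift_set_def by simp
qed

lemma translate_image_iff: "p \<in> translate a ` A \<longleftrightarrow> translate (- a) p \<in> A"
proof
  assume "p \<in> translate a ` A"
  then obtain q where "q \<in> A" "p = translate a q" by blast
  then show "translate (- a) p \<in> A" by simp
next
  assume "translate (- a) p \<in> A"
  moreover have "p = translate a (translate (- a) p)" by simp
  ultimately show "p \<in> translate a ` A" by (rule rev_image_eqI)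
qed

lemma translate_topspace: "p \<in> topspace (ambient X) \<longleftrightarrow> translate a p \<in> topspace (ambient X)"
  by (cases p) simp

lemma continuous_map_translate: "continuous_map (ambient X) (ambient X) (translate a)"
proof -
  have "fst \<circ> (translate a :: real \<times> 'a \<Rightarrow> _) = (\<lambda>p. a + fst p)" by (simp add: fun_eq_iff split_def translate_def)
  moreover have "snd \<circ> (translate a :: real \<times> 'a \<Rightarrow> _) = snd" by (simp add: fun_eq_iff split_def translate_def)
  moreover have "continuous_map (ambient X) euclideanreal (\<lambda>p. a + fst p)"
    by (intro continuous_map_add continuous_map_fst continuous_map_const[THEN iffD2]) simp
  ultimately show ?thesis unfolding continuous_map_pairwise by (simp add: continuous_map_snd)
qed

lemma closedin_translate:
  assumes "closedin (ambient X) A" shows "closedin (ambient X) (translate a ` A)"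
proof -
  have "translate a ` A = {p \<in> topspace (ambient X). translate (- a) p \<in> A}"
    using closedin_subset[OF assms] translate_topspace[of _ X "- a"] by (auto simp: translate_image_iff)
  then show ?thesis using closedin_continuous_map_preimage[OF continuous_map_translate assms] by simp
qed

lemma compactin_translate: "compactin (ambient X) K \<Longrightarrow> compactin (ambient X) (translate a ` K)"
  by (rule image_compactin[OF _ continuous_map_translate])

lemma translate_image_disjoint: "translate a ` A \<inter> B = {} \<longleftrightarrow> A \<inter> translate (- a) ` B = {}"
proof
  assume L: "translate a ` A \<inter> B = {}"
  show "A \<inter> translate (- a) ` B = {}"
  proof (rule ccontr)
    assume "A \<inter> translate (- a) ` B \<noteq> {}"
    then obtain q where q: "q \<in> A" "q \<in> translate (- a) ` B" by blast
    then have "translate a q \<in> B" by (simp add: translate_image_iff)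
    moreover have "translate a q \<in> translate a ` A" using q(1) by blast
    ultimately show False using L by blast
  qed
next
  assume R: "A \<inter> translate (- a) ` B = {}"
  show "translate a ` A \<inter> B = {}"
  proof (rule ccontr)
    assume "translate a ` A \<inter> B \<noteq> {}"
    then obtain p where p: "p \<in> translate a ` A" "p \<in> B" by blast
    then have "translate (- a) p \<in> A" by (simp add: translate_image_iff)
    moreover have "translate (- a) p \<in> translate (- a) ` B" using p(2) by blast
    ultimately show False using R by blast
  qed
qed

lemma translate_slab: "0 \<le> s \<Longrightarrow> translate s ` slab X t \<subseteq> slab X (s + t)"
  unfolding slab_def by auto

definition head_part :: "'a topology \<Rightarrow> real \<Rightarrow> (real \<times> 'a) set \<Rightarrow> (real \<times> 'a) set" where
  "head_part X s Z = Z \<inter> slab X s"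

definition tail_part :: "'a topology \<Rightarrow> real \<Rightarrow> real \<Rightarrow> (real \<times> 'a) set \<Rightarrow> (real \<times> 'a) set" where
  "tail_part X s t Z = shift_set s (Z \<inter> ({s..s + t} \<times> topspace X))"

lemma closedin_interval_Times: "closedin (ambient X) ({a..b} \<times> topspace X)"
  unfolding closedin_prod_Times_iff by simp

lemma oplus_disjoint_iff:
  assumes "Z1 \<subseteq> slab X s" "Z2 \<subseteq> slab X t"
  shows "oplus s Z1 Z2 \<inter> K = {} \<longleftrightarrow> Z1 \<inter> (K \<inter> slab X s) = {} \<and> Z2 \<inter> (translate (- s) ` K \<inter> slab X t) = {}"
proof -
  have "translate s ` Z2 \<inter> K = {} \<longleftrightarrow> Z2 \<inter> translate (- s) ` K = {}"
    by (simp add: translate_image_disjoint)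
  then show ?thesis
    unfolding oplus_eq_translate using assms by blast
qed

lemma tail_part_subset_slab: "tail_part X s t Z \<subseteq> slab X t"
proof
  fix p assume "p \<in> tail_part X s t Z"
  then have "translate s p \<in> Z \<inter> ({s..s + t} \<times> topspace X)"
    unfolding tail_part_def shift_set_eq_translate translate_image_iff by simp
  moreover obtain r l where "p = (r, l)" by fastforce
  ultimately show "p \<in> slab X t" unfolding slab_def by simp
qed

lemma closedin_oplus:
  assumes "0 \<le> s" "0 \<le> t" "closedin (strip_top X s) Z1" "closedin (strip_top X t) Z2"
  shows "closedin (strip_top X (s + t)) (oplus s Z1 Z2)"
proof -
  have Z1: "closedin (ambient X) Z1" "Z1 \<subseteq> slab X s" using assms(3) by (simp_all add: closedin_strip)
  have Z2: "closedin (ambient X) Z2" "Z2 \<subseteq> slab X t" using assms(4) by (simp_all add: closedin_strip)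
  have "closedin (ambient X) (Z1 \<union> translate s ` Z2)" by (intro closedin_Un closedin_translate Z1(1) Z2(1))
  moreover have "Z1 \<union> translate s ` Z2 \<subseteq> slab X (s + t)"
    using Z1(2) Z2(2) slab_mono[OF assms(2), of X s] translate_slab[OF assms(1), of X t] by blast
  ultimately show ?thesis unfolding oplus_eq_translate closedin_strip by blast
qed

context
  fixes X :: "'a topology"
  assumes lc: "locally_compact_space X" and sc: "second_countable X" and H: "Hausdorff_space X"
begin

lemma measurable_head_part:
  assumes "0 \<le> t" shows "head_part X s \<in> measurable (Cspace X (s + t)) (Cspace X s)"
proof (rule measurable_CspaceI[OF lc sc H])
  fix Z assume "Z \<in> space (Cspace X (s + t))"
  then have Z: "closedin (ambient X) Z" by (simp add: space_Cspace closedin_strip)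
  show "closedin (strip_top X s) (head_part X s Z)" unfolding head_part_def closedin_strip
    using closedin_Int[OF Z closedin_slab] by blast
next
  fix K assume "compactin (strip_top X s) K"
  then have K: "compactin (ambient X) K" "K \<subseteq> slab X s" by (simp_all add: compactin_strip)
  then have K': "compactin (strip_top X (s + t)) K"
    using slab_mono[OF assms, of X s] unfolding compactin_strip by blast
  have "{Z \<in> space (Cspace X (s + t)). head_part X s Z \<inter> K = {}} = fell_miss (strip_top X (s + t)) K"
    unfolding head_part_def fell_miss_def space_Cspace using K(2) by blast
  then show "{Z \<in> space (Cspace X (s + t)). head_part X s Z \<inter> K = {}} \<in> sets (Cspace X (s + t))"
    using fell_miss_in_sets_Cspace[OF K'] by simp
qed

lemma measurable_tail_part:
  assumes "0 \<le> s" shows "tail_part X s t \<in> measurable (Cspace X (s + t)) (Cspace X t)"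
proof (rule measurable_CspaceI[OF lc sc H])
  fix Z assume "Z \<in> space (Cspace X (s + t))"
  then have Z: "closedin (ambient X) Z" by (simp add: space_Cspace closedin_strip)
  have "closedin (ambient X) (tail_part X s t Z)" unfolding tail_part_def shift_set_eq_translate
    by (intro closedin_translate closedin_Int Z closedin_interval_Times)
  then show "closedin (strip_top X t) (tail_part X s t Z)" unfolding closedin_strip using tail_part_subset_slab by blast
next
  fix K assume "compactin (strip_top X t) K"
  then have K: "compactin (ambient X) K" "K \<subseteq> slab X t" by (simp_all add: compactin_strip)
  have trK: "translate s ` K \<subseteq> slab X (s + t)" using translate_slab[OF assms, of X t] K(2) by blast
  have K': "compactin (strip_top X (s + t)) (translate s ` K)"
    unfolding compactin_strip using compactin_translate[OF K(1)] trK by blast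
  have trKI: "translate s ` K \<subseteq> {s..s + t} \<times> topspace X"
    using K(2) unfolding slab_def by auto
  have eq: "tail_part X s t Z \<inter> K = {} \<longleftrightarrow> Z \<inter> translate s ` K = {}" for Z
  proof -
    have "tail_part X s t Z \<inter> K = {} \<longleftrightarrow> (Z \<inter> ({s..s + t} \<times> topspace X)) \<inter> translate (- (- s)) ` K = {}"
      unfolding tail_part_def shift_set_eq_translate translate_image_disjoint ..
    also have "\<dots> \<longleftrightarrow> Z \<inter> translate s ` K = {}" using trKI by auto
    finally show ?thesis .
  qed
  have "{Z \<in> space (Cspace X (s + t)). tail_part X s t Z \<inter> K = {}} = fell_miss (strip_top X (s + t)) (translate s ` K)"
    unfolding fell_miss_def space_Cspace eq by blast
  then show "{Z \<in> space (Cspace X (s + t)). tail_part X s t Z \<inter> K = {}} \<in> sets (Cspace X (s + t))"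
    using fell_miss_in_sets_Cspace[OF K'] by simp
qed

lemma measurable_oplus:
  assumes "0 \<le> s" "0 \<le> t"
  shows "(\<lambda>(Z1, Z2). oplus s Z1 Z2) \<in> measurable (Cspace X s \<Otimes>\<^sub>M Cspace X t) (Cspace X (s + t))"
proof (rule measurable_CspaceI[OF lc sc H])
  fix p assume "p \<in> space (Cspace X s \<Otimes>\<^sub>M Cspace X t)"
  then show "closedin (strip_top X (s + t)) (case p of (Z1, Z2) \<Rightarrow> oplus s Z1 Z2)"
    using closedin_oplus[OF assms] by (auto simp: space_pair_measure space_Cspace)
next
  fix K assume "compactin (strip_top X (s + t)) K"
  then have K: "compactin (ambient X) K"
    by (simp add: compactin_strip)
  define K1 where "K1 = K \<inter> slab X s"
  define K2 where "K2 = translate (- s) ` K \<inter> slab X t"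
  have K1: "compactin (strip_top X s) K1"
    unfolding K1_def compactin_strip using compact_Int_closedin[OF K closedin_slab] by blast
  have K2: "compactin (strip_top X t) K2"
    unfolding K2_def compactin_strip
    using compact_Int_closedin[OF compactin_translate[OF K] closedin_slab] by blast
  have oplus_disjoint: "oplus s Z1 Z2 \<inter> K = {} \<longleftrightarrow> Z1 \<inter> K1 = {} \<and> Z2 \<inter> K2 = {}"
    if "closedin (strip_top X s) Z1" "closedin (strip_top X t) Z2" for Z1 Z2
    using that by (simp add: oplus_disjoint_iff closedin_strip K1_def K2_def)
  have "{p \<in> space (Cspace X s \<Otimes>\<^sub>M Cspace X t). (case p of (Z1, Z2) \<Rightarrow> oplus s Z1 Z2) \<inter> K = {}}
      = fell_miss (strip_top X s) K1 \<times> fell_miss (strip_top X t) K2"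
  proof (rule set_eqI)
    fix p :: "(real \<times> 'a) set \<times> (real \<times> 'a) set"
    show "p \<in> {p \<in> space (Cspace X s \<Otimes>\<^sub>M Cspace X t). (case p of (Z1, Z2) \<Rightarrow> oplus s Z1 Z2) \<inter> K = {}}
        \<longleftrightarrow> p \<in> fell_miss (strip_top X s) K1 \<times> fell_miss (strip_top X t) K2"
      by (cases p) (simp add: space_pair_measure space_Cspace fell_miss_def, metis oplus_disjoint)
  qed
  then show "{p \<in> space (Cspace X s \<Otimes>\<^sub>M Cspace X t). (case p of (Z1, Z2) \<Rightarrow> oplus s Z1 Z2) \<inter> K = {}}
      \<in> sets (Cspace X s \<Otimes>\<^sub>M Cspace X t)"
    using K1 K2 by (simp add: pair_measureI fell_miss_in_sets_Cspace)
qed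

lemma hits_line_in_sets_Cspace:
  assumes "r \<in> {0..t}"
  shows "{Z \<in> space (Cspace X t). Z \<inter> ({r} \<times> topspace X) \<noteq> {}} \<in> sets (Cspace X t)"
proof -
  have "closedin (strip_top X t) ({r} \<times> topspace X)"
    unfolding closedin_strip closedin_prod_Times_iff slab_def using assms by auto
  from fell_hit_closed_in_sets_borel[OF locally_compact_space_strip_top[OF lc]
      second_countable_strip_top[OF sc] Hausdorff_space_strip_top[OF H] this]
  have "fell_hit (strip_top X t) ({r} \<times> topspace X) \<in> sets (Cspace X t)" unfolding Cspace_def .
  moreover have "{Z \<in> space (Cspace X t). Z \<inter> ({r} \<times> topspace X) \<noteq> {}} = fell_hit (strip_top X t) ({r} \<times> topspace X)"
    unfolding space_Cspace fell_hit_def by blast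
  ultimately show ?thesis by simp
qed

end

lemma mem_head_part: "p \<in> head_part X s Z \<longleftrightarrow> p \<in> Z \<and> p \<in> slab X s"
  unfolding head_part_def by blast

lemma mem_tail_part: "p \<in> tail_part X s t Z \<longleftrightarrow> translate s p \<in> Z \<and> translate s p \<in> {s..s + t} \<times> topspace X"
  unfolding tail_part_def shift_set_eq_translate translate_image_iff by simp

lemma head_part_oplus:
  assumes "Z1 \<subseteq> slab X s" "Z2 \<subseteq> slab X t" "Z2 \<inter> ({0} \<times> topspace X) = {}"
  shows "head_part X s (oplus s Z1 Z2) = Z1"
proof -
  have "translate s ` Z2 \<inter> slab X s = {}"
  proof (rule equals0I)
    fix p assume "p \<in> translate s ` Z2 \<inter> slab X s"
    then obtain q where q: "q \<in> Z2" "translate s q \<in> slab X s"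
      by blast
    obtain a l where q_eq: "q = (a, l)"
      by fastforce
    have "0 \<le> a" "l \<in> topspace X"
      using q(1) assms(2) by (auto simp: slab_def q_eq)
    moreover have "a \<le> 0"
      using q(2) by (simp add: slab_def q_eq)
    ultimately have "q \<in> Z2 \<inter> ({0} \<times> topspace X)"
      using q(1) by (simp add: q_eq)
    with assms(3) show False
      by blast
  qed
  then show ?thesis
    unfolding head_part_def oplus_eq_translate using assms(1) by blast
qed

lemma tail_part_oplus:
  assumes "Z1 \<subseteq> slab X s" "Z2 \<subseteq> slab X t" "Z1 \<inter> ({s} \<times> topspace X) = {}"
  shows "tail_part X s t (oplus s Z1 Z2) = Z2"
proof -
  let ?I = "{s..s + t} \<times> topspace X"
  have e1: "Z1 \<inter> ?I = {}"
  proof (rule ccontr)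
    assume "Z1 \<inter> ?I \<noteq> {}"
    then obtain p where p: "p \<in> Z1" "p \<in> ?I" by blast
    obtain a l where pa: "p = (a, l)" by fastforce
    have "a \<le> s" using p(1) assms(1) unfolding pa slab_def by auto
    moreover have "s \<le> a" "l \<in> topspace X" using p(2) unfolding pa by auto
    ultimately have "p \<in> Z1 \<inter> ({s} \<times> topspace X)" using p(1) pa by simp
    then show False using assms(3) by blast
  qed
  have e2: "translate s ` Z2 \<subseteq> ?I"
  proof
    fix p assume "p \<in> translate s ` Z2"
    then obtain q where q: "q \<in> Z2" "p = translate s q" by blast
    obtain a l where qa: "q = (a, l)" by fastforce
    show "p \<in> ?I" using q assms(2) unfolding qa slab_def by auto
  qed
  have "(Z1 \<union> translate s ` Z2) \<inter> ?I = translate s ` Z2" using e1 e2 by blast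
  then show ?thesis unfolding tail_part_def oplus_eq_translate shift_set_eq_translate by (simp add: image_image)
qed

lemma oplus_head_tail_part:
  assumes "0 \<le> s" "0 \<le> t" "Z \<subseteq> slab X (s + t)"
  shows "oplus s (head_part X s Z) (tail_part X s t Z) = Z"
proof -
  let ?I = "{s..s + t} \<times> topspace X"
  have "translate s ` tail_part X s t Z = Z \<inter> ?I" unfolding tail_part_def shift_set_eq_translate by (simp add: image_image)
  moreover have "slab X (s + t) \<subseteq> slab X s \<union> ?I" unfolding slab_def by auto
  ultimately show ?thesis unfolding oplus_eq_translate head_part_def using assms(3) by blast
qed

lemma head_part_head_part: "0 \<le> s \<Longrightarrow> head_part X r (head_part X (r + s) Z) = head_part X r Z"
  unfolding head_part_def using slab_mono[of s X r] by blast

lemma head_part_tail_part: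
  assumes "0 \<le> r" "0 \<le> s" "0 \<le> t"
  shows "head_part X s (tail_part X r (s + t) Z) = tail_part X r s (head_part X (r + s) Z)"
proof (rule set_eqI)
  fix p :: "real \<times> 'a"
  obtain a l where pa: "p = (a, l)" by fastforce
  show "p \<in> head_part X s (tail_part X r (s + t) Z) \<longleftrightarrow> p \<in> tail_part X r s (head_part X (r + s) Z)"
    unfolding mem_head_part mem_tail_part pa slab_def using assms by auto
qed

lemma tail_part_tail_part:
  assumes "0 \<le> s"
  shows "tail_part X s t (tail_part X r (s + t) Z) = tail_part X (r + s) t Z"
proof (rule set_eqI)
  fix p :: "real \<times> 'a"
  obtain a l where pa: "p = (a, l)" by fastforce
  show "p \<in> tail_part X s t (tail_part X r (s + t) Z) \<longleftrightarrow> p \<in> tail_part X (r + s) t Z"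
    unfolding mem_tail_part pa using assms by (auto simp: add.assoc)
qed

lemma oplus_assoc: "oplus r Z1 (oplus s Z2 Z3) = oplus (r + s) (oplus r Z1 Z2) Z3"
  unfolding oplus_eq_translate by (simp add: image_Un image_image Un_assoc)

lemma Uop_eq_head_tail_part: "Uop X \<mu> s t f g Z =
  complex_of_real (sqrt (enn2real (Delta X \<mu> s t Z))) * f (head_part X s Z) * g (tail_part X s t Z)"
  by (simp add: Uop_def head_part_def tail_part_def slab_def)

lemma AE_pair_fst:
  assumes "sigma_finite_measure M2" "AE x in M1. P x"
  shows "AE p in M1 \<Otimes>\<^sub>M M2. P (fst p)"
proof -
  obtain N where N: "{x\<in>space M1. \<not> P x} \<subseteq> N" "emeasure M1 N = 0" "N \<in> sets M1"
    using assms(2) by (rule AE_E)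
  have "N \<times> space M2 \<in> null_sets (M1 \<Otimes>\<^sub>M M2)"
    by (rule sigma_finite_measure.times_in_null_sets1[OF assms(1)]) (use N in \<open>simp_all add: null_sets_def\<close>)
  moreover have "{p\<in>space (M1 \<Otimes>\<^sub>M M2). \<not> P (fst p)} \<subseteq> N \<times> space M2"
    using N(1) by (auto simp: space_pair_measure)
  ultimately show ?thesis by (rule AE_I')
qed

lemma AE_pair_snd:
  assumes "sigma_finite_measure M2" "AE y in M2. P y"
  shows "AE p in M1 \<Otimes>\<^sub>M M2. P (snd p)"
proof -
  obtain N where N: "{x\<in>space M2. \<not> P x} \<subseteq> N" "emeasure M2 N = 0" "N \<in> sets M2"
    using assms(2) by (rule AE_E)
  have "space M1 \<times> N \<in> null_sets (M1 \<Otimes>\<^sub>M M2)"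
    by (rule sigma_finite_measure.times_in_null_sets2[OF assms(1)]) (use N in \<open>simp_all add: null_sets_def\<close>)
  moreover have "{p\<in>space (M1 \<Otimes>\<^sub>M M2). \<not> P (snd p)} \<subseteq> space M1 \<times> N"
    using N(1) by (auto simp: space_pair_measure)
  ultimately show ?thesis by (rule AE_I')
qed

section \<open>Factorizing families\<close>

definition oplus_pair :: "real \<Rightarrow> (real \<times> 'a) set \<times> (real \<times> 'a) set \<Rightarrow> (real \<times> 'a) set" where
  "oplus_pair s = (\<lambda>(Z1, Z2). oplus s Z1 Z2)"

definition decompose :: "'a topology \<Rightarrow> real \<Rightarrow> real \<Rightarrow> (real \<times> 'a) set \<Rightarrow> (real \<times> 'a) set \<times> (real \<times> 'a) set"
  where "decompose X s t Z = (head_part X s Z, tail_part X s t Z)"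

lemma fst_decompose [simp]: "fst (decompose X s t Z) = head_part X s Z"
  and snd_decompose [simp]: "snd (decompose X s t Z) = tail_part X s t Z"
  by (simp_all add: decompose_def)

lemma oplus_pair_apply: "oplus_pair s p = oplus s (fst p) (snd p)"
  by (simp add: oplus_pair_def split_beta)

locale factorizing =
  fixes X :: "'a topology" and \<mu> :: "real \<Rightarrow> (real \<times> 'a) set measure"
  assumes lc: "locally_compact_space X" and sc: "second_countable X" and H: "Hausdorff_space X"
    and ff: "factorizing_family X \<mu>"
begin

lemma prob_space_mu: "0 < t \<Longrightarrow> prob_space (\<mu> t)"
  using ff unfolding factorizing_family_def by blast

lemma sets_mu: "0 < t \<Longrightarrow> sets (\<mu> t) = sets (Cspace X t)"
  using ff unfolding factorizing_family_def by blast

lemma space_mu: "0 < t \<Longrightarrow> space (\<mu> t) = {F. closedin (strip_top X t) F}"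
  using ff unfolding factorizing_family_def space_Cspace by blast

lemma space_mu_subset_slab: "0 < t \<Longrightarrow> Z \<in> space (\<mu> t) \<Longrightarrow> Z \<subseteq> slab X t"
  using space_mu by (simp add: closedin_strip)

lemma sigma_finite_mu: "0 < t \<Longrightarrow> sigma_finite_measure (\<mu> t)"
  using prob_space_mu prob_space_imp_sigma_finite by blast

lemma pair_sigma_finite_mu: "0 < s \<Longrightarrow> 0 < t \<Longrightarrow> pair_sigma_finite (\<mu> s) (\<mu> t)"
  using sigma_finite_mu by (simp add: pair_sigma_finite_def)

lemma prob_space_pair_mu:
  assumes "0 < s" "0 < t"
  shows "prob_space (\<mu> s \<Otimes>\<^sub>M \<mu> t)"
proof -
  interpret pair_prob_space "\<mu> s" "\<mu> t"
    using assms by (simp add: pair_prob_space_def pair_sigma_finite_mu prob_space_mu)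
  show ?thesis
    by (rule P.prob_space_axioms)
qed

lemma measurable_mu_eq: "0 < t \<Longrightarrow> measurable M (\<mu> t) = measurable M (Cspace X t)"
  by (rule measurable_cong_sets[OF refl sets_mu])

lemma measurable_mu_eq': "0 < t \<Longrightarrow> measurable (\<mu> t) N = measurable (Cspace X t) N"
  by (rule measurable_cong_sets[OF sets_mu refl])

lemma measurable_decompose:
  assumes "0 < s" "0 < t"
  shows "decompose X s t \<in> measurable (Cspace X (s + t)) (\<mu> s \<Otimes>\<^sub>M \<mu> t)"
  unfolding decompose_def
proof (rule measurable_Pair)
  show "head_part X s \<in> measurable (Cspace X (s + t)) (\<mu> s)"
    using measurable_head_part[OF lc sc H, of t s] assms by (simp add: measurable_mu_eq)
  show "tail_part X s t \<in> measurable (Cspace X (s + t)) (\<mu> t)"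
    using measurable_tail_part[OF lc sc H, of s t] assms by (simp add: measurable_mu_eq)
qed

lemma measurable_decompose_mu: "0 < s \<Longrightarrow> 0 < t \<Longrightarrow> decompose X s t \<in> measurable (\<mu> (s + t)) (\<mu> s \<Otimes>\<^sub>M \<mu> t)"
  using measurable_decompose by (simp add: measurable_mu_eq')

lemma measurable_head_part_mu: "0 < s \<Longrightarrow> 0 < t \<Longrightarrow> head_part X s \<in> measurable (\<mu> (s + t)) (\<mu> s)"
  using measurable_head_part[OF lc sc H, of t s] measurable_cong_sets[OF sets_mu[of "s + t"] sets_mu[of s]]
  by simp

lemma measurable_tail_part_mu: "0 < s \<Longrightarrow> 0 < t \<Longrightarrow> tail_part X s t \<in> measurable (\<mu> (s + t)) (\<mu> t)"
  using measurable_tail_part[OF lc sc H, of s t] measurable_cong_sets[OF sets_mu[of "s + t"] sets_mu[of t]]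
  by simp

lemma measurable_oplus_pair:
  assumes "0 < s" "0 < t"
  shows "oplus_pair s \<in> measurable (\<mu> s \<Otimes>\<^sub>M \<mu> t) (Cspace X (s + t))"
proof -
  have "measurable (\<mu> s \<Otimes>\<^sub>M \<mu> t) (Cspace X (s + t))
      = measurable (Cspace X s \<Otimes>\<^sub>M Cspace X t) (Cspace X (s + t))"
    by (rule measurable_cong_sets[OF sets_pair_measure_cong[OF sets_mu[OF assms(1)] sets_mu[OF assms(2)]] refl])
  then show ?thesis
    unfolding oplus_pair_def using measurable_oplus[OF lc sc H] assms by simp
qed

lemma measurable_oplus_pair_mu: "0 < s \<Longrightarrow> 0 < t \<Longrightarrow> oplus_pair s \<in> measurable (\<mu> s \<Otimes>\<^sub>M \<mu> t) (\<mu> (s + t))"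
  using measurable_oplus_pair by (simp add: measurable_mu_eq)

lemma oplus_pair_decompose:
  "0 < s \<Longrightarrow> 0 < t \<Longrightarrow> Z \<in> space (\<mu> (s + t)) \<Longrightarrow> oplus_pair s (decompose X s t Z) = Z"
  using oplus_head_tail_part[of s t Z X] space_mu_subset_slab[of "s + t" Z]
  by (simp add: oplus_pair_apply decompose_def)

lemma AE_misses_line:
  assumes "0 < t" "r \<in> {0..t}"
  shows "AE Z in \<mu> t. Z \<inter> ({r} \<times> topspace X) = {}"
proof -
  have "emeasure (\<mu> t) {Z \<in> space (\<mu> t). Z \<inter> ({r} \<times> topspace X) \<noteq> {}} = 0"
    using ff assms unfolding factorizing_family_def by blast
  moreover have "{Z \<in> space (\<mu> t). Z \<inter> ({r} \<times> topspace X) \<noteq> {}} \<in> sets (\<mu> t)"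
    using hits_line_in_sets_Cspace[OF lc sc H assms(2)] sets_mu[OF assms(1)]
      sets_eq_imp_space_eq[OF sets_mu[OF assms(1)]] by simp
  ultimately show ?thesis
    by (subst AE_iff_measurable[OF _ refl]) simp_all
qed

text \<open>Here the hypothesis that no \<open>\<mu>\<^sub>t\<close> charges a vertical line enters.\<close>

lemma AE_decompose_oplus_pair:
  assumes st: "0 < s" "0 < t"
  shows "AE p in \<mu> s \<Otimes>\<^sub>M \<mu> t. decompose X s t (oplus_pair s p) = p"
proof -
  have "AE p in \<mu> s \<Otimes>\<^sub>M \<mu> t. fst p \<inter> ({s} \<times> topspace X) = {}"
    using st by (intro AE_pair_fst[OF sigma_finite_mu[OF st(2)] AE_misses_line[OF st(1)]]) simp
  moreover have "AE p in \<mu> s \<Otimes>\<^sub>M \<mu> t. snd p \<inter> ({0} \<times> topspace X) = {}"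
    using st by (intro AE_pair_snd[OF sigma_finite_mu[OF st(2)] AE_misses_line[OF st(2)]]) simp
  ultimately show ?thesis
    using AE_space[of "\<mu> s \<Otimes>\<^sub>M \<mu> t"]
  proof eventually_elim
    case (elim p)
    then have "fst p \<in> space (\<mu> s)" "snd p \<in> space (\<mu> t)"
      by (auto simp: space_pair_measure)
    then have slabs: "fst p \<subseteq> slab X s" "snd p \<subseteq> slab X t"
      using space_mu_subset_slab st by blast+
    show ?case
      using head_part_oplus[OF slabs elim(2)] tail_part_oplus[OF slabs elim(1)]
      by (simp add: oplus_pair_apply decompose_def prod_eq_iff)
  qed
qed

definition concat_measure :: "real \<Rightarrow> real \<Rightarrow> (real \<times> 'a) set measure" where
  "concat_measure s t = distr (\<mu> s \<Otimes>\<^sub>M \<mu> t) (Cspace X (s + t)) (oplus_pair s)"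

lemma sets_concat_measure: "0 < s \<Longrightarrow> 0 < t \<Longrightarrow> sets (concat_measure s t) = sets (\<mu> (s + t))"
  unfolding concat_measure_def using sets_mu[of "s + t"] by simp

lemma distr_concat_measure_decompose:
  assumes st: "0 < s" "0 < t"
  shows "distr (concat_measure s t) (\<mu> s \<Otimes>\<^sub>M \<mu> t) (decompose X s t) = \<mu> s \<Otimes>\<^sub>M \<mu> t"
proof -
  have "distr (concat_measure s t) (\<mu> s \<Otimes>\<^sub>M \<mu> t) (decompose X s t)
      = distr (\<mu> s \<Otimes>\<^sub>M \<mu> t) (\<mu> s \<Otimes>\<^sub>M \<mu> t) (decompose X s t \<circ> oplus_pair s)"
    unfolding concat_measure_def using measurable_decompose[OF st] measurable_oplus_pair[OF st]
    by (rule distr_distr)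
  also have "\<dots> = distr (\<mu> s \<Otimes>\<^sub>M \<mu> t) (\<mu> s \<Otimes>\<^sub>M \<mu> t) (\<lambda>p. p)"
    using AE_decompose_oplus_pair[OF st] measurable_decompose[OF st] measurable_oplus_pair[OF st]
    by (intro distr_cong_AE) auto
  finally show ?thesis
    by simp
qed

lemma measurable_decompose_concat_measure:
  "0 < s \<Longrightarrow> 0 < t \<Longrightarrow> decompose X s t \<in> measurable (concat_measure s t) (\<mu> s \<Otimes>\<^sub>M \<mu> t)"
  using measurable_decompose_mu measurable_cong_sets[OF sets_concat_measure refl] by metis

lemma nn_integral_concat_measure:
  assumes st: "0 < s" "0 < t" and \<phi>: "\<phi> \<in> borel_measurable (\<mu> s \<Otimes>\<^sub>M \<mu> t)"
  shows "(\<integral>\<^sup>+Z. \<phi> (decompose X s t Z) \<partial>concat_measure s t) = (\<integral>\<^sup>+p. \<phi> p \<partial>(\<mu> s \<Otimes>\<^sub>M \<mu> t))"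
  using nn_integral_distr[OF measurable_decompose_concat_measure[OF st], of \<phi>] \<phi>
  by (simp add: distr_concat_measure_decompose[OF st])

lemma integrable_concat_measure_iff:
  fixes \<phi> :: "_ \<Rightarrow> 'b::{banach, second_countable_topology}"
  assumes st: "0 < s" "0 < t" and \<phi>: "\<phi> \<in> borel_measurable (\<mu> s \<Otimes>\<^sub>M \<mu> t)"
  shows "integrable (concat_measure s t) (\<lambda>Z. \<phi> (decompose X s t Z)) \<longleftrightarrow> integrable (\<mu> s \<Otimes>\<^sub>M \<mu> t) \<phi>"
  using integrable_distr_eq[OF measurable_decompose_concat_measure[OF st] \<phi>]
  by (simp add: distr_concat_measure_decompose[OF st])

lemma integral_concat_measure:
  fixes \<phi> :: "_ \<Rightarrow> 'b::{banach, second_countable_topology}"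
  assumes st: "0 < s" "0 < t" and \<phi>: "\<phi> \<in> borel_measurable (\<mu> s \<Otimes>\<^sub>M \<mu> t)"
  shows "(\<integral>Z. \<phi> (decompose X s t Z) \<partial>concat_measure s t) = (\<integral>p. \<phi> p \<partial>(\<mu> s \<Otimes>\<^sub>M \<mu> t))"
  using integral_distr[OF measurable_decompose_concat_measure[OF st] \<phi>]
  by (simp add: distr_concat_measure_decompose[OF st])

lemma Delta_eq_RN_deriv: "Delta X \<mu> s t = RN_deriv (\<mu> (s + t)) (concat_measure s t)"
  by (simp add: Delta_def concat_measure_def oplus_pair_def)

lemma absolutely_continuous_concat_measure:
  "0 < s \<Longrightarrow> 0 < t \<Longrightarrow> absolutely_continuous (\<mu> (s + t)) (concat_measure s t)"
  "0 < s \<Longrightarrow> 0 < t \<Longrightarrow> absolutely_continuous (concat_measure s t) (\<mu> (s + t))"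
  using ff unfolding factorizing_family_def concat_measure_def oplus_pair_def by blast+

lemma density_Delta: "0 < s \<Longrightarrow> 0 < t \<Longrightarrow> density (\<mu> (s + t)) (Delta X \<mu> s t) = concat_measure s t"
  unfolding Delta_eq_RN_deriv
  by (rule sigma_finite_measure.density_RN_deriv[OF sigma_finite_mu
        absolutely_continuous_concat_measure(1) sets_concat_measure]) simp_all

lemma borel_measurable_Delta[measurable]: "Delta X \<mu> s t \<in> borel_measurable (\<mu> (s + t))"
  unfolding Delta_eq_RN_deriv by (rule borel_measurable_RN_deriv)

lemma AE_Delta_finite: "0 < s \<Longrightarrow> 0 < t \<Longrightarrow> AE Z in \<mu> (s + t). Delta X \<mu> s t Z \<noteq> \<infinity>"
  unfolding Delta_eq_RN_deriv
  by (rule sigma_finite_measure.RN_deriv_finite[OF sigma_finite_mu _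
        absolutely_continuous_concat_measure(1) sets_concat_measure])
    (simp_all add: concat_measure_def prob_space_imp_sigma_finite prob_space.prob_space_distr
      prob_space_pair_mu measurable_oplus_pair)

lemma AE_Delta_nonzero:
  assumes st: "0 < s" "0 < t"
  shows "AE Z in \<mu> (s + t). Delta X \<mu> s t Z \<noteq> 0"
proof -
  let ?N = "{Z \<in> space (\<mu> (s + t)). Delta X \<mu> s t Z = 0}"
  have N: "?N \<in> sets (\<mu> (s + t))"
    by measurable
  have "emeasure (concat_measure s t) ?N = (\<integral>\<^sup>+ Z. Delta X \<mu> s t Z * indicator ?N Z \<partial>\<mu> (s + t))"
    unfolding density_Delta[OF st, symmetric] by (rule emeasure_density[OF borel_measurable_Delta N])
  also have "\<dots> = 0"
    by (simp add: nn_integral_0_iff_AE split: split_indicator)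
  finally have "?N \<in> null_sets (concat_measure s t)"
    using N sets_concat_measure[OF st] by (simp add: null_sets_def)
  then have "?N \<in> null_sets (\<mu> (s + t))"
    using absolutely_continuous_concat_measure(2)[OF st] unfolding absolutely_continuous_def by blast
  then show ?thesis
    by (rule AE_I') simp
qed

lemma density_enn2real_Delta:
  assumes st: "0 < s" "0 < t"
  shows "density (\<mu> (s + t)) (\<lambda>Z. ennreal (enn2real (Delta X \<mu> s t Z))) = concat_measure s t"
proof -
  have "AE Z in \<mu> (s + t). ennreal (enn2real (Delta X \<mu> s t Z)) = Delta X \<mu> s t Z"
    using AE_Delta_finite[OF st] by eventually_elim (simp add: less_top)
  then show ?thesis
    unfolding density_Delta[OF st, symmetric] by (intro density_cong) simp_all
qed

lemma nn_integral_Delta_decompose: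
  assumes st: "0 < s" "0 < t" and \<phi>: "\<phi> \<in> borel_measurable (\<mu> s \<Otimes>\<^sub>M \<mu> t)"
  shows "(\<integral>\<^sup>+Z. Delta X \<mu> s t Z * \<phi> (decompose X s t Z) \<partial>\<mu> (s + t)) = (\<integral>\<^sup>+p. \<phi> p \<partial>(\<mu> s \<Otimes>\<^sub>M \<mu> t))"
proof -
  have "(\<lambda>Z. \<phi> (decompose X s t Z)) \<in> borel_measurable (\<mu> (s + t))"
    using measurable_compose[OF measurable_decompose_mu[OF st] \<phi>] .
  then have "(\<integral>\<^sup>+Z. Delta X \<mu> s t Z * \<phi> (decompose X s t Z) \<partial>\<mu> (s + t))
      = (\<integral>\<^sup>+Z. \<phi> (decompose X s t Z) \<partial>concat_measure s t)"
    unfolding density_Delta[OF st, symmetric] by (rule nn_integral_density[symmetric, OF borel_measurable_Delta])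
  then show ?thesis
    using nn_integral_concat_measure[OF st \<phi>] by simp
qed

lemma
  fixes \<phi> :: "_ \<Rightarrow> 'b::{banach, second_countable_topology}"
  assumes st: "0 < s" "0 < t" and \<phi>: "integrable (\<mu> s \<Otimes>\<^sub>M \<mu> t) \<phi>"
  shows integrable_Delta_decompose:
      "integrable (\<mu> (s + t)) (\<lambda>Z. enn2real (Delta X \<mu> s t Z) *\<^sub>R \<phi> (decompose X s t Z))"
    and integral_Delta_decompose:
      "(\<integral>Z. enn2real (Delta X \<mu> s t Z) *\<^sub>R \<phi> (decompose X s t Z) \<partial>\<mu> (s + t)) = (\<integral>p. \<phi> p \<partial>(\<mu> s \<Otimes>\<^sub>M \<mu> t))"
proof -
  have \<phi>_meas: "\<phi> \<in> borel_measurable (\<mu> s \<Otimes>\<^sub>M \<mu> t)"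
    using \<phi> by (rule borel_measurable_integrable)
  have [measurable]: "(\<lambda>Z. \<phi> (decompose X s t Z)) \<in> borel_measurable (\<mu> (s + t))"
    using measurable_compose[OF measurable_decompose_mu[OF st] \<phi>_meas] .
  note density = integrable_density[symmetric] integral_density[symmetric]
  show "integrable (\<mu> (s + t)) (\<lambda>Z. enn2real (Delta X \<mu> s t Z) *\<^sub>R \<phi> (decompose X s t Z))"
    using \<phi> integrable_concat_measure_iff[OF st \<phi>_meas]
    by (subst density) (simp_all add: density_enn2real_Delta[OF st])
  show "(\<integral>Z. enn2real (Delta X \<mu> s t Z) *\<^sub>R \<phi> (decompose X s t Z) \<partial>\<mu> (s + t)) = (\<integral>p. \<phi> p \<partial>(\<mu> s \<Otimes>\<^sub>M \<mu> t))"
    using integral_concat_measure[OF st \<phi>_meas]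
    by (subst density) (simp_all add: density_enn2real_Delta[OF st])
qed

end

lemma L2_borel_measurable: "f \<in> L2 M \<Longrightarrow> f \<in> borel_measurable M"
  unfolding L2_def by simp

lemma L2_integrable_norm_sq: "f \<in> L2 M \<Longrightarrow> integrable M (\<lambda>x. (cmod (f x))\<^sup>2)"
  unfolding L2_def by simp

lemma bounded_in_L2:
  assumes "finite_measure M" "f \<in> borel_measurable M" "\<And>x. cmod (f x) \<le> B"
  shows "f \<in> L2 M"
proof -
  have "integrable M (\<lambda>x. (cmod (f x))\<^sup>2)"
  proof (rule finite_measure.integrable_const_bound[OF assms(1)])
    show "AE x in M. norm ((cmod (f x))\<^sup>2) \<le> B\<^sup>2"
      using assms(3) by (intro AE_I2) (simp add: power_mono)
    show "(\<lambda>x. (cmod (f x))\<^sup>2) \<in> borel_measurable M" using assms(2) by measurable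
  qed
  then show ?thesis unfolding L2_def using assms(2) by simp
qed

lemma integrable_cnj_mult_L2:
  assumes "f \<in> L2 M" "g \<in> L2 M"
  shows "integrable M (\<lambda>x. cnj (f x) * g x)"
proof (rule Bochner_Integration.integrable_bound)
  show "integrable M (\<lambda>x. (cmod (f x))\<^sup>2 + (cmod (g x))\<^sup>2)"
    using assms unfolding L2_def by simp
  have fm[measurable]: "f \<in> borel_measurable M" "g \<in> borel_measurable M" using assms unfolding L2_def by simp_all
  have cb: "(\<lambda>x. cnj x) \<in> borel_measurable borel"
    by (rule borel_measurable_continuous_onI[OF continuous_on_cnj[OF continuous_on_id]])
  have [measurable]: "(\<lambda>x. cnj (f x)) \<in> borel_measurable M" by (rule measurable_compose[OF fm(1) cb])
  show "(\<lambda>x. cnj (f x) * g x) \<in> borel_measurable M" by measurable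
  show "AE x in M. norm (cnj (f x) * g x) \<le> norm ((cmod (f x))\<^sup>2 + (cmod (g x))\<^sup>2)"
  proof (rule AE_I2)
    fix x
    have a: "0 \<le> (cmod (f x) - cmod (g x))\<^sup>2" by simp
    have b: "0 \<le> cmod (f x) * cmod (g x)" by simp
    have e: "(cmod (f x) - cmod (g x))\<^sup>2 = (cmod (f x))\<^sup>2 + (cmod (g x))\<^sup>2 - 2 * (cmod (f x) * cmod (g x))"
      by (simp add: power2_eq_square algebra_simps)
    have "cmod (f x) * cmod (g x) \<le> (cmod (f x))\<^sup>2 + (cmod (g x))\<^sup>2"
      using a b e by linarith
    then show "norm (cnj (f x) * g x) \<le> norm ((cmod (f x))\<^sup>2 + (cmod (g x))\<^sup>2)"
      by (simp add: norm_mult)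
  qed
qed

lemma
  fixes f :: "'a \<Rightarrow> 'c::{real_normed_field, banach, second_countable_topology}" and g :: "'b \<Rightarrow> 'c"
  assumes ps: "pair_sigma_finite M1 M2" and fi: "integrable M1 f" and gi: "integrable M2 g"
  shows integrable_pair_measure_tensor: "integrable (M1 \<Otimes>\<^sub>M M2) (\<lambda>p. f (fst p) * g (snd p))"
    and integral_pair_measure_tensor: "(\<integral>p. f (fst p) * g (snd p) \<partial>(M1 \<Otimes>\<^sub>M M2)) = (\<integral>x. f x \<partial>M1) * (\<integral>y. g y \<partial>M2)"
proof -
  interpret pair_sigma_finite M1 M2 by (rule ps)
  have [measurable]: "f \<in> borel_measurable M1" "g \<in> borel_measurable M2" using fi gi by auto
  have m: "(\<lambda>p. f (fst p) * g (snd p)) \<in> borel_measurable (M1 \<Otimes>\<^sub>M M2)" by measurable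
  have m2: "(\<lambda>p. ennreal (norm (f (fst p))) * ennreal (norm (g (snd p)))) \<in> borel_measurable (M1 \<Otimes>\<^sub>M M2)"
    by measurable
  have "(\<integral>\<^sup>+p. ennreal (norm (f (fst p) * g (snd p))) \<partial>(M1 \<Otimes>\<^sub>M M2))
      = (\<integral>\<^sup>+p. ennreal (norm (f (fst p))) * ennreal (norm (g (snd p))) \<partial>(M1 \<Otimes>\<^sub>M M2))"
    by (simp add: norm_mult ennreal_mult)
  also have "\<dots> = (\<integral>\<^sup>+x. \<integral>\<^sup>+y. ennreal (norm (f x)) * ennreal (norm (g y)) \<partial>M2 \<partial>M1)"
    using M2.nn_integral_fst[OF m2] by simp
  also have "\<dots> = (\<integral>\<^sup>+x. ennreal (norm (f x)) * (\<integral>\<^sup>+y. ennreal (norm (g y)) \<partial>M2) \<partial>M1)"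
    by (simp add: nn_integral_cmult)
  also have "\<dots> = (\<integral>\<^sup>+x. ennreal (norm (f x)) \<partial>M1) * (\<integral>\<^sup>+y. ennreal (norm (g y)) \<partial>M2)"
    by (simp add: nn_integral_multc)
  also have "\<dots> < \<infinity>"
    using fi gi unfolding integrable_iff_bounded by (simp add: ennreal_mult_less_top)
  finally show I: "integrable (M1 \<Otimes>\<^sub>M M2) (\<lambda>p. f (fst p) * g (snd p))"
    by (intro integrableI_bounded m)
  have "(\<integral>p. f (fst p) * g (snd p) \<partial>(M1 \<Otimes>\<^sub>M M2)) = (\<integral>x. (\<integral>y. f x * g y \<partial>M2) \<partial>M1)"
    using integral_fst'[OF I] by simp
  also have "\<dots> = (\<integral>x. f x * (\<integral>y. g y \<partial>M2) \<partial>M1)" by simp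
  also have "\<dots> = (\<integral>x. f x \<partial>M1) * (\<integral>y. g y \<partial>M2)" by simp
  finally show "(\<integral>p. f (fst p) * g (snd p) \<partial>(M1 \<Otimes>\<^sub>M M2)) = (\<integral>x. f x \<partial>M1) * (\<integral>y. g y \<partial>M2)" .
qed

section \<open>Algebraic tensors are dense in \<open>L\<^sup>2\<close> of a product\<close>

inductive_set tensor_span :: "'a measure \<Rightarrow> 'b measure \<Rightarrow> ('a \<times> 'b \<Rightarrow> complex) set" for M1 M2 where
  zero: "(\<lambda>p. 0) \<in> tensor_span M1 M2"
| add_tensor: "T \<in> tensor_span M1 M2 \<Longrightarrow> F \<in> L2 M1 \<Longrightarrow> G \<in> L2 M2 \<Longrightarrow>
    (\<lambda>p. T p + c * F (fst p) * G (snd p)) \<in> tensor_span M1 M2"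

lemma tensor_span_eq_sum:
  assumes "T \<in> tensor_span M1 M2"
  shows "\<exists>n c F G. (\<forall>i<n. F i \<in> L2 M1 \<and> G i \<in> L2 M2) \<and>
           T = (\<lambda>p. \<Sum>i<(n::nat). c i * F i (fst p) * G i (snd p))"
  using assms
proof (induction rule: tensor_span.induct)
  case zero
  show ?case
    by (rule exI[of _ "0::nat"], rule exI[of _ "\<lambda>_. 0"], rule exI[of _ "\<lambda>_ _. 0"],
        rule exI[of _ "\<lambda>_ _. 0"]) simp
next
  case (add_tensor T F G c)
  from add_tensor.IH obtain n c' F' G' where
    h: "\<forall>i<n. F' i \<in> L2 M1 \<and> G' i \<in> L2 M2"
       "T = (\<lambda>p. \<Sum>i<(n::nat). c' i * F' i (fst p) * G' i (snd p))" by blast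
  define c2 where "c2 = c'(n := c)"
  define F2 where "F2 = F'(n := F)"
  define G2 where "G2 = G'(n := G)"
  have 1: "\<forall>i<Suc n. F2 i \<in> L2 M1 \<and> G2 i \<in> L2 M2"
    using h(1) add_tensor.hyps(2,3) unfolding F2_def G2_def by (simp add: less_Suc_eq)
  have 2: "(\<lambda>p. T p + c * F (fst p) * G (snd p)) = (\<lambda>p. \<Sum>i<Suc n. c2 i * F2 i (fst p) * G2 i (snd p))"
  proof
    fix p
    have "(\<Sum>i<n. c2 i * F2 i (fst p) * G2 i (snd p)) = (\<Sum>i<n. c' i * F' i (fst p) * G' i (snd p))"
      by (rule sum.cong) (simp_all add: c2_def F2_def G2_def)
    then show "T p + c * F (fst p) * G (snd p) = (\<Sum>i<Suc n. c2 i * F2 i (fst p) * G2 i (snd p))"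
      using h(2) by (simp add: c2_def F2_def G2_def)
  qed
  show ?case
    by (rule exI[of _ "Suc n"], rule exI[of _ c2], rule exI[of _ F2], rule exI[of _ G2]) (use 1 2 in simp)
qed

lemma tensor_span_add:
  assumes "T1 \<in> tensor_span M1 M2" "T2 \<in> tensor_span M1 M2"
  shows "(\<lambda>p. T1 p + T2 p) \<in> tensor_span M1 M2"
  using assms(2)
proof (induction rule: tensor_span.induct)
  case zero then show ?case using assms(1) by simp
next
  case (add_tensor T F G c)
  have "(\<lambda>p. (T1 p + T p) + c * F (fst p) * G (snd p)) \<in> tensor_span M1 M2"
    by (rule tensor_span.add_tensor[OF add_tensor.IH add_tensor.hyps(2,3)])
  then show ?case by (simp add: add.assoc)
qed

lemma tensor_span_scale:
  assumes "T \<in> tensor_span M1 M2"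
  shows "(\<lambda>p. a * T p) \<in> tensor_span M1 M2"
  using assms
proof (induction rule: tensor_span.induct)
  case zero then show ?case using tensor_span.zero by simp
next
  case (add_tensor T F G c)
  have "(\<lambda>p. a * T p + (a * c) * F (fst p) * G (snd p)) \<in> tensor_span M1 M2"
    by (rule tensor_span.add_tensor[OF add_tensor.IH add_tensor.hyps(2,3)])
  then show ?case by (simp add: algebra_simps)
qed

lemma tensor_span_measurable:
  assumes "T \<in> tensor_span M1 M2"
  shows "T \<in> borel_measurable (M1 \<Otimes>\<^sub>M M2)"
  using assms
proof (induction rule: tensor_span.induct)
  case zero then show ?case by simp
next
  case (add_tensor T F G c)
  have [measurable]: "F \<in> borel_measurable M1" "G \<in> borel_measurable M2"
    using add_tensor.hyps(2,3) by (simp_all add: L2_borel_measurable)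
  note [measurable] = add_tensor.IH
  show ?case by measurable
qed

definition tensor_approx :: "'a measure \<Rightarrow> 'b measure \<Rightarrow> ('a \<times> 'b \<Rightarrow> complex) \<Rightarrow> bool" where
  "tensor_approx M1 M2 H \<longleftrightarrow> H \<in> borel_measurable (M1 \<Otimes>\<^sub>M M2) \<and>
     (\<forall>e>0. \<exists>T\<in>tensor_span M1 M2. (\<integral>\<^sup>+p. ennreal ((cmod (H p - T p))\<^sup>2) \<partial>(M1 \<Otimes>\<^sub>M M2)) < ennreal e)"

lemma ennreal_less_ennrealE:
  assumes "(I::ennreal) < ennreal x"
  obtains r where "0 \<le> r" "I = ennreal r" "r < x"
proof -
  have "I \<noteq> \<top>" using assms by auto
  then obtain r where r: "0 \<le> r" "I = ennreal r" by (cases I rule: ennreal_cases) auto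
  have "r < x"
  proof (cases "0 \<le> x")
    case True then show ?thesis using assms r by (simp add: ennreal_less_iff)
  next
    case False then show ?thesis using assms r by (simp add: ennreal_neg)
  qed
  then show ?thesis using r that by blast
qed

lemma norm_add_sq_le: "(cmod (a + b))\<^sup>2 \<le> 2 * (cmod a)\<^sup>2 + 2 * (cmod b)\<^sup>2"
proof -
  have "(cmod (a + b))\<^sup>2 \<le> (cmod a + cmod b)\<^sup>2"
    by (rule power_mono[OF norm_triangle_ineq]) simp
  also have "\<dots> \<le> 2 * (cmod a)\<^sup>2 + 2 * (cmod b)\<^sup>2"
    using sum_squares_bound[of "cmod a" "cmod b"] by (simp add: power2_eq_square algebra_simps)
  finally show ?thesis .
qed

lemma nn_integral_sq_dist_triangle:
  fixes H T U :: "'c \<Rightarrow> complex"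
  assumes m: "H \<in> borel_measurable M" "T \<in> borel_measurable M" "U \<in> borel_measurable M"
    and e1: "(\<integral>\<^sup>+p. ennreal ((cmod (H p - U p))\<^sup>2) \<partial>M) < ennreal (e / 4)"
    and e2: "(\<integral>\<^sup>+p. ennreal ((cmod (U p - T p))\<^sup>2) \<partial>M) < ennreal (e / 4)"
  shows "(\<integral>\<^sup>+p. ennreal ((cmod (H p - T p))\<^sup>2) \<partial>M) < ennreal e"
proof -
  obtain r1 where r1: "0 \<le> r1" "(\<integral>\<^sup>+p. ennreal ((cmod (H p - U p))\<^sup>2) \<partial>M) = ennreal r1" "r1 < e / 4"
    using e1 by (rule ennreal_less_ennrealE)
  obtain r2 where r2: "0 \<le> r2" "(\<integral>\<^sup>+p. ennreal ((cmod (U p - T p))\<^sup>2) \<partial>M) = ennreal r2" "r2 < e / 4"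
    using e2 by (rule ennreal_less_ennrealE)
  have "(\<integral>\<^sup>+p. ennreal ((cmod (H p - T p))\<^sup>2) \<partial>M)
      \<le> (\<integral>\<^sup>+p. ennreal 2 * ennreal ((cmod (H p - U p))\<^sup>2) + ennreal 2 * ennreal ((cmod (U p - T p))\<^sup>2) \<partial>M)"
  proof (rule nn_integral_mono)
    fix p
    have "(cmod (H p - T p))\<^sup>2 \<le> 2 * (cmod (H p - U p))\<^sup>2 + 2 * (cmod (U p - T p))\<^sup>2"
      using norm_add_sq_le[of "H p - U p" "U p - T p"] by simp
    then have "ennreal ((cmod (H p - T p))\<^sup>2) \<le> ennreal (2 * (cmod (H p - U p))\<^sup>2 + 2 * (cmod (U p - T p))\<^sup>2)"
      by (rule ennreal_leI)
    also have "\<dots> = ennreal 2 * ennreal ((cmod (H p - U p))\<^sup>2) + ennreal 2 * ennreal ((cmod (U p - T p))\<^sup>2)"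
      by (simp add: ennreal_plus ennreal_mult)
    finally show "ennreal ((cmod (H p - T p))\<^sup>2) \<le> ennreal 2 * ennreal ((cmod (H p - U p))\<^sup>2) + ennreal 2 * ennreal ((cmod (U p - T p))\<^sup>2)" .
  qed
  also have "\<dots> = ennreal 2 * (\<integral>\<^sup>+p. ennreal ((cmod (H p - U p))\<^sup>2) \<partial>M) + ennreal 2 * (\<integral>\<^sup>+p. ennreal ((cmod (U p - T p))\<^sup>2) \<partial>M)"
    using m by (simp add: nn_integral_add nn_integral_cmult)
  also have "\<dots> = ennreal (2 * r1 + 2 * r2)"
    using r1 r2 by (simp add: ennreal_plus ennreal_mult)
  also have "\<dots> < ennreal e"
    by (rule ennreal_less_iff[THEN iffD2]) (use r1 r2 in linarith)+
  finally show ?thesis .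
qed

lemma simple_function_approx_L2:
  fixes H :: "'a \<Rightarrow> complex"
  assumes m: "H \<in> borel_measurable M" and fin: "(\<integral>\<^sup>+p. ennreal ((cmod (H p))\<^sup>2) \<partial>M) < \<infinity>"
    and d: "0 < d"
  obtains S where "simple_function M S" "(\<integral>\<^sup>+p. ennreal ((cmod (H p - S p))\<^sup>2) \<partial>M) < ennreal d"
proof -
  obtain F where F: "\<And>i. simple_function M (F i)"
    "\<And>x. x \<in> space M \<Longrightarrow> (\<lambda>i. F i x) \<longlonglongrightarrow> H x"
    "\<And>i x. x \<in> space M \<Longrightarrow> dist (F i x) 0 \<le> 2 * dist (H x) 0"
    using borel_measurable_implies_sequence_metric[OF m, of 0] by blast
  have mF: "F i \<in> borel_measurable M" for i
    using F(1) borel_measurable_simple_function by blast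
  have lim: "(\<lambda>i. \<integral>\<^sup>+p. ennreal ((cmod (H p - F i p))\<^sup>2) \<partial>M) \<longlonglongrightarrow> (\<integral>\<^sup>+p. 0 \<partial>M)"
  proof (rule nn_integral_dominated_convergence[where w = "\<lambda>p. ennreal (9 * (cmod (H p))\<^sup>2)"])
    show "(\<lambda>p. ennreal ((cmod (H p - F i p))\<^sup>2)) \<in> borel_measurable M" for i
      using m mF[of i] by measurable
    show "(\<lambda>p. 0) \<in> borel_measurable M" by simp
    show "(\<lambda>p. ennreal (9 * (cmod (H p))\<^sup>2)) \<in> borel_measurable M" using m by measurable
    show "AE x in M. ennreal ((cmod (H x - F j x))\<^sup>2) \<le> ennreal (9 * (cmod (H x))\<^sup>2)" for j
    proof (rule AE_I2)
      fix x assume x: "x \<in> space M"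
      have "cmod (F j x) \<le> 2 * cmod (H x)" using F(3)[OF x, of j] by simp
      then have "cmod (H x - F j x) \<le> 3 * cmod (H x)"
        using norm_triangle_ineq4[of "H x" "F j x"] by linarith
      then have "(cmod (H x - F j x))\<^sup>2 \<le> (3 * cmod (H x))\<^sup>2" by (rule power_mono) simp
      then show "ennreal ((cmod (H x - F j x))\<^sup>2) \<le> ennreal (9 * (cmod (H x))\<^sup>2)"
        by (intro ennreal_leI) (simp add: power_mult_distrib)
    qed
    have "(\<integral>\<^sup>+p. ennreal (9 * (cmod (H p))\<^sup>2) \<partial>M) = 9 * (\<integral>\<^sup>+p. ennreal ((cmod (H p))\<^sup>2) \<partial>M)"
      using m by (simp add: ennreal_mult nn_integral_cmult)
    also have "\<dots> < \<infinity>" using fin by (simp add: ennreal_mult_less_top)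
    finally show "(\<integral>\<^sup>+p. ennreal (9 * (cmod (H p))\<^sup>2) \<partial>M) < \<infinity>" .
    show "AE x in M. (\<lambda>i. ennreal ((cmod (H x - F i x))\<^sup>2)) \<longlonglongrightarrow> 0"
    proof (rule AE_I2)
      fix x assume x: "x \<in> space M"
      have "(\<lambda>i. (cmod (H x - F i x))\<^sup>2) \<longlonglongrightarrow> (cmod (H x - H x))\<^sup>2"
        by (intro tendsto_intros F(2)[OF x])
      then have "(\<lambda>i. ennreal ((cmod (H x - F i x))\<^sup>2)) \<longlonglongrightarrow> ennreal ((cmod (H x - H x))\<^sup>2)"
        by (rule tendsto_ennrealI)
      then show "(\<lambda>i. ennreal ((cmod (H x - F i x))\<^sup>2)) \<longlonglongrightarrow> 0" by simp
    qed
  qed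
  then have "eventually (\<lambda>i. (\<integral>\<^sup>+p. ennreal ((cmod (H p - F i p))\<^sup>2) \<partial>M) < ennreal d) sequentially"
    by (rule order_tendstoD(2)) (simp add: d)
  then obtain i where "(\<integral>\<^sup>+p. ennreal ((cmod (H p - F i p))\<^sup>2) \<partial>M) < ennreal d"
    unfolding eventually_sequentially by blast
  then show ?thesis
    using F(1) that by blast
qed

context
  fixes M1 :: "'a measure" and M2 :: "'b measure"
  assumes fin1: "finite_measure M1" and fin2: "finite_measure M2"
begin

lemma fin_pair: "finite_measure (M1 \<Otimes>\<^sub>M M2)"
  by (rule finite_measure_pair_measure[OF fin2 fin1])

lemma tensor_approx_zero: "tensor_approx M1 M2 (\<lambda>p. 0)"
  unfolding tensor_approx_def
proof (intro conjI allI impI)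
  fix e :: real assume "0 < e"
  show "\<exists>T\<in>tensor_span M1 M2. (\<integral>\<^sup>+p. ennreal ((cmod (0 - T p))\<^sup>2) \<partial>(M1 \<Otimes>\<^sub>M M2)) < ennreal e"
    by (rule bexI[OF _ tensor_span.zero]) (simp add: \<open>0 < e\<close>)
qed simp

lemma tensor_approx_rectangle:
  assumes A: "A \<in> sets M1" and B: "B \<in> sets M2"
  shows "tensor_approx M1 M2 (\<lambda>p. indicator A (fst p) * indicator B (snd p))"
  unfolding tensor_approx_def
proof (intro conjI allI impI)
  show "(\<lambda>p. indicator A (fst p) * indicator B (snd p) :: complex) \<in> borel_measurable (M1 \<Otimes>\<^sub>M M2)"
    using A B by measurable
  fix e :: real assume "0 < e"
  have LA: "(indicator A :: 'a \<Rightarrow> complex) \<in> L2 M1"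
    by (rule bounded_in_L2[OF fin1, of _ 1]) (use A in \<open>simp_all split: split_indicator\<close>)
  have LB: "(indicator B :: 'b \<Rightarrow> complex) \<in> L2 M2"
    by (rule bounded_in_L2[OF fin2, of _ 1]) (use B in \<open>simp_all split: split_indicator\<close>)
  have T: "(\<lambda>p. 0 + 1 * indicator A (fst p) * indicator B (snd p)) \<in> tensor_span M1 M2"
    by (rule tensor_span.add_tensor[OF tensor_span.zero LA LB])
  show "\<exists>T\<in>tensor_span M1 M2. (\<integral>\<^sup>+p. ennreal ((cmod (indicator A (fst p) * indicator B (snd p) - T p))\<^sup>2) \<partial>(M1 \<Otimes>\<^sub>M M2)) < ennreal e"
    by (rule bexI[OF _ T]) (simp add: \<open>0 < e\<close>)
qed

lemma tensor_approx_add: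
  assumes "tensor_approx M1 M2 H1" "tensor_approx M1 M2 H2"
  shows "tensor_approx M1 M2 (\<lambda>p. H1 p + H2 p)"
  unfolding tensor_approx_def
proof (intro conjI allI impI)
  have m1: "H1 \<in> borel_measurable (M1 \<Otimes>\<^sub>M M2)" and m2: "H2 \<in> borel_measurable (M1 \<Otimes>\<^sub>M M2)"
    using assms unfolding tensor_approx_def by simp_all
  then show "(\<lambda>p. H1 p + H2 p) \<in> borel_measurable (M1 \<Otimes>\<^sub>M M2)" by measurable
  fix e :: real assume e: "0 < e"
  obtain T1 where T1: "T1 \<in> tensor_span M1 M2" "(\<integral>\<^sup>+p. ennreal ((cmod (H1 p - T1 p))\<^sup>2) \<partial>(M1 \<Otimes>\<^sub>M M2)) < ennreal (e / 4)"
    using assms(1) e unfolding tensor_approx_def by (meson divide_pos_pos zero_less_numeral)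
  obtain T2 where T2: "T2 \<in> tensor_span M1 M2" "(\<integral>\<^sup>+p. ennreal ((cmod (H2 p - T2 p))\<^sup>2) \<partial>(M1 \<Otimes>\<^sub>M M2)) < ennreal (e / 4)"
    using assms(2) e unfolding tensor_approx_def by (meson divide_pos_pos zero_less_numeral)
  have T: "(\<lambda>p. T1 p + T2 p) \<in> tensor_span M1 M2" by (rule tensor_span_add[OF T1(1) T2(1)])
  have mT1: "T1 \<in> borel_measurable (M1 \<Otimes>\<^sub>M M2)" by (rule tensor_span_measurable[OF T1(1)])
  have mT2: "T2 \<in> borel_measurable (M1 \<Otimes>\<^sub>M M2)" by (rule tensor_span_measurable[OF T2(1)])
  let ?D1 = "\<lambda>p. H1 p - T1 p" and ?D2 = "\<lambda>p. H2 p - T2 p"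
  have "(\<integral>\<^sup>+p. ennreal ((cmod (?D1 p - (- ?D2 p)))\<^sup>2) \<partial>(M1 \<Otimes>\<^sub>M M2)) < ennreal e"
  proof (rule nn_integral_sq_dist_triangle[where U = "\<lambda>_. 0"])
    show "?D1 \<in> borel_measurable (M1 \<Otimes>\<^sub>M M2)" using m1 mT1 by measurable
    show "(\<lambda>p. - ?D2 p) \<in> borel_measurable (M1 \<Otimes>\<^sub>M M2)" using m2 mT2 by measurable
  qed (use T1(2) T2(2) in simp_all)
  moreover have "(\<lambda>p. ennreal ((cmod (?D1 p - (- ?D2 p)))\<^sup>2)) = (\<lambda>p. ennreal ((cmod ((H1 p + H2 p) - (T1 p + T2 p)))\<^sup>2))"
    by (rule ext) (simp add: algebra_simps)
  ultimately show "\<exists>T\<in>tensor_span M1 M2. (\<integral>\<^sup>+p. ennreal ((cmod ((H1 p + H2 p) - T p))\<^sup>2) \<partial>(M1 \<Otimes>\<^sub>M M2)) < ennreal e"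
    using T by (intro bexI[of _ "\<lambda>p. T1 p + T2 p"]) auto
qed

lemma tensor_approx_measurable: "tensor_approx M1 M2 H \<Longrightarrow> H \<in> borel_measurable (M1 \<Otimes>\<^sub>M M2)"
  unfolding tensor_approx_def by simp

lemma tensor_approx_limit:
  assumes m: "H \<in> borel_measurable (M1 \<Otimes>\<^sub>M M2)"
    and lim: "\<And>d. d > 0 \<Longrightarrow> \<exists>H'. tensor_approx M1 M2 H' \<and> (\<integral>\<^sup>+p. ennreal ((cmod (H p - H' p))\<^sup>2) \<partial>(M1 \<Otimes>\<^sub>M M2)) < ennreal d"
  shows "tensor_approx M1 M2 H"
  unfolding tensor_approx_def
proof (intro conjI allI impI m)
  fix e :: real assume e: "0 < e"
  obtain H' where H': "tensor_approx M1 M2 H'" "(\<integral>\<^sup>+p. ennreal ((cmod (H p - H' p))\<^sup>2) \<partial>(M1 \<Otimes>\<^sub>M M2)) < ennreal (e / 4)"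
    using lim[of "e / 4"] e by auto
  obtain T where T: "T \<in> tensor_span M1 M2" "(\<integral>\<^sup>+p. ennreal ((cmod (H' p - T p))\<^sup>2) \<partial>(M1 \<Otimes>\<^sub>M M2)) < ennreal (e / 4)"
    using H'(1) e unfolding tensor_approx_def by (meson divide_pos_pos zero_less_numeral)
  have "(\<integral>\<^sup>+p. ennreal ((cmod (H p - T p))\<^sup>2) \<partial>(M1 \<Otimes>\<^sub>M M2)) < ennreal e"
    by (rule nn_integral_sq_dist_triangle[OF m tensor_span_measurable[OF T(1)] tensor_approx_measurable[OF H'(1)] H'(2) T(2)])
  then show "\<exists>T\<in>tensor_span M1 M2. (\<integral>\<^sup>+p. ennreal ((cmod (H p - T p))\<^sup>2) \<partial>(M1 \<Otimes>\<^sub>M M2)) < ennreal e"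
    using T(1) by blast
qed

lemma tensor_approx_cong:
  assumes "tensor_approx M1 M2 H" "H' \<in> borel_measurable (M1 \<Otimes>\<^sub>M M2)"
    "\<And>p. p \<in> space (M1 \<Otimes>\<^sub>M M2) \<Longrightarrow> H p = H' p"
  shows "tensor_approx M1 M2 H'"
  unfolding tensor_approx_def
proof (intro conjI allI impI assms(2))
  fix e :: real assume e: "0 < e"
  obtain T where T: "T \<in> tensor_span M1 M2" "(\<integral>\<^sup>+p. ennreal ((cmod (H p - T p))\<^sup>2) \<partial>(M1 \<Otimes>\<^sub>M M2)) < ennreal e"
    using assms(1) e unfolding tensor_approx_def by blast
  have "(\<integral>\<^sup>+p. ennreal ((cmod (H' p - T p))\<^sup>2) \<partial>(M1 \<Otimes>\<^sub>M M2)) = (\<integral>\<^sup>+p. ennreal ((cmod (H p - T p))\<^sup>2) \<partial>(M1 \<Otimes>\<^sub>M M2))"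
    by (rule nn_integral_cong) (simp add: assms(3))
  then have "(\<integral>\<^sup>+p. ennreal ((cmod (H' p - T p))\<^sup>2) \<partial>(M1 \<Otimes>\<^sub>M M2)) < ennreal e"
    using T(2) by simp
  then show "\<exists>T\<in>tensor_span M1 M2. (\<integral>\<^sup>+p. ennreal ((cmod (H' p - T p))\<^sup>2) \<partial>(M1 \<Otimes>\<^sub>M M2)) < ennreal e"
    using T(1) by blast
qed

lemma tensor_approx_scale:
  assumes "tensor_approx M1 M2 H"
  shows "tensor_approx M1 M2 (\<lambda>p. a * H p)"
proof (cases "a = 0")
  case True
  show ?thesis by (rule tensor_approx_cong[OF tensor_approx_zero]) (simp_all add: True)
next
  case False
  have m: "H \<in> borel_measurable (M1 \<Otimes>\<^sub>M M2)" using assms by (rule tensor_approx_measurable)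
  show ?thesis unfolding tensor_approx_def
  proof (intro conjI allI impI)
    show "(\<lambda>p. a * H p) \<in> borel_measurable (M1 \<Otimes>\<^sub>M M2)" using m by measurable
    fix e :: real assume e: "0 < e"
    have ca: "0 < (cmod a)\<^sup>2" using False by simp
    obtain T where T: "T \<in> tensor_span M1 M2" "(\<integral>\<^sup>+p. ennreal ((cmod (H p - T p))\<^sup>2) \<partial>(M1 \<Otimes>\<^sub>M M2)) < ennreal (e / (cmod a)\<^sup>2)"
      using assms e ca unfolding tensor_approx_def by (meson divide_pos_pos)
    have mT: "T \<in> borel_measurable (M1 \<Otimes>\<^sub>M M2)" by (rule tensor_span_measurable[OF T(1)])
    have "(\<integral>\<^sup>+p. ennreal ((cmod (a * H p - a * T p))\<^sup>2) \<partial>(M1 \<Otimes>\<^sub>M M2))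
        = (\<integral>\<^sup>+p. ennreal ((cmod a)\<^sup>2) * ennreal ((cmod (H p - T p))\<^sup>2) \<partial>(M1 \<Otimes>\<^sub>M M2))"
    proof (rule nn_integral_cong)
      fix p
      have "(cmod (a * H p - a * T p))\<^sup>2 = (cmod a)\<^sup>2 * (cmod (H p - T p))\<^sup>2"
        by (simp add: right_diff_distrib[symmetric] norm_mult power_mult_distrib)
      then show "ennreal ((cmod (a * H p - a * T p))\<^sup>2) = ennreal ((cmod a)\<^sup>2) * ennreal ((cmod (H p - T p))\<^sup>2)"
        by (simp add: ennreal_mult)
    qed
    also have "\<dots> = ennreal ((cmod a)\<^sup>2) * (\<integral>\<^sup>+p. ennreal ((cmod (H p - T p))\<^sup>2) \<partial>(M1 \<Otimes>\<^sub>M M2))"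
      using m mT by (simp add: nn_integral_cmult)
    also have "\<dots> < ennreal ((cmod a)\<^sup>2) * ennreal (e / (cmod a)\<^sup>2)"
      by (rule ennreal_mult_strict_left_mono[OF T(2)]) (use ca in simp_all)
    also have "\<dots> = ennreal ((cmod a)\<^sup>2 * (e / (cmod a)\<^sup>2))"
      by (rule ennreal_mult[symmetric]) (use ca e in simp_all)
    also have "\<dots> = ennreal e" using ca by simp
    finally have "(\<integral>\<^sup>+p. ennreal ((cmod (a * H p - a * T p))\<^sup>2) \<partial>(M1 \<Otimes>\<^sub>M M2)) < ennreal e" .
    moreover have "(\<lambda>p. a * T p) \<in> tensor_span M1 M2" by (rule tensor_span_scale[OF T(1)])
    ultimately show "\<exists>T\<in>tensor_span M1 M2. (\<integral>\<^sup>+p. ennreal ((cmod (a * H p - T p))\<^sup>2) \<partial>(M1 \<Otimes>\<^sub>M M2)) < ennreal e"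
      by (intro bexI[of _ "\<lambda>p. a * T p"]) auto
  qed
qed

lemma tensor_approx_sum:
  assumes "finite I" "\<And>i. i \<in> I \<Longrightarrow> tensor_approx M1 M2 (f i)"
  shows "tensor_approx M1 M2 (\<lambda>p. \<Sum>i\<in>I. f i p)"
  using assms
proof (induction I rule: finite_induct)
  case empty then show ?case using tensor_approx_zero by simp
next
  case (insert i I)
  have "tensor_approx M1 M2 (\<lambda>p. f i p + (\<Sum>i\<in>I. f i p))"
    by (rule tensor_approx_add) (use insert in simp_all)
  then show ?case using insert.hyps by simp
qed

lemma tensor_approx_indicator_compl:
  assumes Bs: "B \<in> sets (M1 \<Otimes>\<^sub>M M2)" and B: "tensor_approx M1 M2 (\<lambda>p. indicator B p)"
  shows "tensor_approx M1 M2 (\<lambda>p. indicator (space M1 \<times> space M2 - B) p)"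
proof -
  have "tensor_approx M1 M2 (\<lambda>p. indicator (space M1) (fst p) * indicator (space M2) (snd p) + (- 1) * indicator B p)"
    by (intro tensor_approx_add tensor_approx_rectangle tensor_approx_scale B sets.top)
  then show ?thesis
  proof (rule tensor_approx_cong)
    have "space M1 \<times> space M2 - B \<in> sets (M1 \<Otimes>\<^sub>M M2)"
      using Bs by (metis sets.compl_sets space_pair_measure)
    then show "(\<lambda>p. indicator (space M1 \<times> space M2 - B) p :: complex) \<in> borel_measurable (M1 \<Otimes>\<^sub>M M2)"
      by simp
  next
    fix p assume "p \<in> space (M1 \<Otimes>\<^sub>M M2)"
    then have "fst p \<in> space M1" "snd p \<in> space M2" "p \<in> space M1 \<times> space M2"
      by (auto simp: space_pair_measure)
    then show "indicator (space M1) (fst p) * indicator (space M2) (snd p) + (- 1) * indicator B p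
        = (indicator (space M1 \<times> space M2 - B) p :: complex)"
      by (cases "p \<in> B") simp_all
  qed
qed

lemma tensor_approx_indicator_disjoint_UN:
  fixes A :: "nat \<Rightarrow> ('a \<times> 'b) set"
  assumes A: "disjoint_family A" "\<And>i. A i \<in> sets (M1 \<Otimes>\<^sub>M M2)"
    "\<And>i. tensor_approx M1 M2 (\<lambda>p. indicator (A i) p)"
  shows "tensor_approx M1 M2 (\<lambda>p. indicator (\<Union>(range A)) p)"
proof -
  let ?U = "\<Union> (range A)"
  define B where "B n = (\<Union>i\<in>{..<n}. A i)" for n
  have Us: "?U \<in> sets (M1 \<Otimes>\<^sub>M M2)"
    using A(2) by auto
  have Bs: "B n \<in> sets (M1 \<Otimes>\<^sub>M M2)" for n
    unfolding B_def using A(2) by auto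
  have BU: "B n \<subseteq> ?U" for n
    unfolding B_def by blast
  have appB: "tensor_approx M1 M2 (\<lambda>p. indicator (B n) p)" for n
  proof (rule tensor_approx_cong)
    show "tensor_approx M1 M2 (\<lambda>p. \<Sum>i\<in>{..<n}. indicator (A i) p)"
      by (rule tensor_approx_sum) (simp_all add: A(3))
    show "(\<lambda>p. indicator (B n) p :: complex) \<in> borel_measurable (M1 \<Otimes>\<^sub>M M2)"
      using Bs by simp
    fix p
    have "disjoint_family_on A {..<n}"
      using A(1) by (rule disjoint_family_on_mono[rotated]) simp
    then show "(\<Sum>i\<in>{..<n}. indicator (A i) p) = (indicator (B n) p :: complex)"
      unfolding B_def by (simp add: indicator_UN_disjoint)
  qed
  show ?thesis
  proof (rule tensor_approx_limit)
    show "(\<lambda>p. indicator ?U p :: complex) \<in> borel_measurable (M1 \<Otimes>\<^sub>M M2)"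
      using Us by simp
    fix d :: real assume d: "0 < d"
    have "incseq B"
      unfolding B_def incseq_def by (intro allI impI UN_mono) auto
    moreover have "\<Union> (range B) = ?U"
      unfolding B_def by blast
    ultimately have "(\<lambda>n. measure (M1 \<Otimes>\<^sub>M M2) (B n)) \<longlonglongrightarrow> measure (M1 \<Otimes>\<^sub>M M2) ?U"
      using finite_measure.finite_Lim_measure_incseq[OF fin_pair, of B] Bs by auto
    then obtain N where N: "\<And>n. n \<ge> N \<Longrightarrow> norm (measure (M1 \<Otimes>\<^sub>M M2) (B n) - measure (M1 \<Otimes>\<^sub>M M2) ?U) < d"
      using d unfolding LIMSEQ_iff by blast
    have "(\<integral>\<^sup>+p. ennreal ((cmod (indicator ?U p - indicator (B N) p))\<^sup>2) \<partial>(M1 \<Otimes>\<^sub>M M2))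
        = (\<integral>\<^sup>+p. indicator (?U - B N) p \<partial>(M1 \<Otimes>\<^sub>M M2))"
      using BU[of N] by (intro nn_integral_cong) (auto split: split_indicator)
    also have "\<dots> = ennreal (measure (M1 \<Otimes>\<^sub>M M2) ?U - measure (M1 \<Otimes>\<^sub>M M2) (B N))"
      using Us Bs finite_measure.emeasure_eq_measure[OF fin_pair]
        finite_measure.finite_measure_Diff[OF fin_pair Us Bs BU] by simp
    also have "\<dots> < ennreal d"
      using N[of N] d by (intro ennreal_lessI) auto
    finally show "\<exists>H'. tensor_approx M1 M2 H' \<and>
        (\<integral>\<^sup>+p. ennreal ((cmod (indicator ?U p - H' p))\<^sup>2) \<partial>(M1 \<Otimes>\<^sub>M M2)) < ennreal d"
      using appB[of N] by blast
  qed
qed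

text \<open>Dynkin's \<open>\<pi>\<close>-\<open>\<lambda>\<close> argument over the measurable rectangles.\<close>

lemma tensor_approx_indicator:
  assumes "A \<in> sets (M1 \<Otimes>\<^sub>M M2)"
  shows "tensor_approx M1 M2 (\<lambda>p. indicator A p)"
proof -
  let ?O = "space M1 \<times> space M2" and ?G = "{a \<times> b | a b. a \<in> sets M1 \<and> b \<in> sets M2}"
  have sets_eq: "sets (M1 \<Otimes>\<^sub>M M2) = sigma_sets ?O ?G"
    by (rule sets_pair_measure)
  have G: "?G \<subseteq> Pow ?O"
    by (rule pair_measure_closed)
  have A: "A \<in> sigma_sets ?O ?G"
    using assms sets_eq by simp
  show ?thesis
  proof (rule sigma_sets_induct_disjoint[OF Int_stable_pair_measure_generator G A])
    fix B assume "B \<in> ?G"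
    then obtain a b where "B = a \<times> b" "a \<in> sets M1" "b \<in> sets M2"
      by blast
    then show "tensor_approx M1 M2 (\<lambda>p. indicator B p)"
      using tensor_approx_rectangle by (simp add: indicator_times)
  next
    show "tensor_approx M1 M2 (\<lambda>p. indicator {} p)"
      using tensor_approx_zero by simp
  next
    fix B assume "B \<in> sigma_sets ?O ?G" "tensor_approx M1 M2 (\<lambda>p. indicator B p)"
    then show "tensor_approx M1 M2 (\<lambda>p. indicator (?O - B) p)"
      using tensor_approx_indicator_compl sets_eq by blast
  next
    fix A :: "nat \<Rightarrow> _"
    assume A: "disjoint_family A" "range A \<subseteq> sigma_sets ?O ?G"
      "\<And>i. tensor_approx M1 M2 (\<lambda>p. indicator (A i) p)"
    then have "A i \<in> sets (M1 \<Otimes>\<^sub>M M2)" for i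
      using sets_eq by blast
    then show "tensor_approx M1 M2 (\<lambda>p. indicator (\<Union>(range A)) p)"
      by (rule tensor_approx_indicator_disjoint_UN[OF A(1) _ A(3)])
  qed
qed

lemma tensor_approx_simple:
  assumes "simple_function (M1 \<Otimes>\<^sub>M M2) S"
  shows "tensor_approx M1 M2 S"
proof (rule tensor_approx_cong)
  show "tensor_approx M1 M2 (\<lambda>p. \<Sum>y\<in>S ` space (M1 \<Otimes>\<^sub>M M2). y * indicator (S -` {y} \<inter> space (M1 \<Otimes>\<^sub>M M2)) p)"
    by (intro tensor_approx_sum tensor_approx_scale tensor_approx_indicator simple_functionD[OF assms])
  show "S \<in> borel_measurable (M1 \<Otimes>\<^sub>M M2)" by (rule borel_measurable_simple_function[OF assms])
  fix p assume p: "p \<in> space (M1 \<Otimes>\<^sub>M M2)"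
  have "(\<Sum>y\<in>S ` space (M1 \<Otimes>\<^sub>M M2). y * indicator (S -` {y} \<inter> space (M1 \<Otimes>\<^sub>M M2)) p)
      = (\<Sum>y\<in>S ` space (M1 \<Otimes>\<^sub>M M2). indicat_real (S -` {y} \<inter> space (M1 \<Otimes>\<^sub>M M2)) p *\<^sub>R y)"
    by (intro sum.cong) (simp_all split: split_indicator)
  also have "\<dots> = S p" by (rule simple_function_indicator_representation_banach[OF assms p, symmetric])
  finally show "(\<Sum>y\<in>S ` space (M1 \<Otimes>\<^sub>M M2). y * indicator (S -` {y} \<inter> space (M1 \<Otimes>\<^sub>M M2)) p) = S p" .
qed

lemma tensor_approx_L2:
  assumes m: "H \<in> borel_measurable (M1 \<Otimes>\<^sub>M M2)"
    and fin: "(\<integral>\<^sup>+p. ennreal ((cmod (H p))\<^sup>2) \<partial>(M1 \<Otimes>\<^sub>M M2)) < \<infinity>"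
  shows "tensor_approx M1 M2 H"
proof (rule tensor_approx_limit[OF m])
  fix d :: real assume "d > 0"
  then obtain S where "simple_function (M1 \<Otimes>\<^sub>M M2) S"
    "(\<integral>\<^sup>+p. ennreal ((cmod (H p - S p))\<^sup>2) \<partial>(M1 \<Otimes>\<^sub>M M2)) < ennreal d"
    using simple_function_approx_L2[OF m fin] by metis
  then show "\<exists>H'. tensor_approx M1 M2 H' \<and> (\<integral>\<^sup>+p. ennreal ((cmod (H p - H' p))\<^sup>2) \<partial>(M1 \<Otimes>\<^sub>M M2)) < ennreal d"
    using tensor_approx_simple by blast
qed

end

section \<open>The maps \<open>U\<^sub>s\<^sub>,\<^sub>t\<close>\<close>

lemma nn_integral_le_1:
  assumes "prob_space M" "\<And>x. x \<in> space M \<Longrightarrow> f x \<le> 1"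
  shows "(\<integral>\<^sup>+x. f x \<partial>M) \<le> 1"
proof -
  have "(\<integral>\<^sup>+x. f x \<partial>M) \<le> (\<integral>\<^sup>+x. 1 \<partial>M)"
    using assms(2) by (intro nn_integral_mono) simp
  also have "\<dots> = 1"
    using prob_space.emeasure_space_1[OF assms(1)] by simp
  finally show ?thesis .
qed

lemma sqrt_enn2real_mult: "sqrt (enn2real (a * b)) = sqrt (enn2real a) * sqrt (enn2real b)"
  by (simp add: enn2real_mult real_sqrt_mult)

context factorizing
begin

lemma Uop_eq_decompose:
  "Uop X \<mu> s t f g Z = complex_of_real (sqrt (enn2real (Delta X \<mu> s t Z))) *
     (f (fst (decompose X s t Z)) * g (snd (decompose X s t Z)))"
  by (simp add: Uop_eq_head_tail_part decompose_def)

lemma borel_measurable_Uop: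
  assumes st: "0 < s" "0 < t" and f: "f \<in> borel_measurable (\<mu> s)" and g: "g \<in> borel_measurable (\<mu> t)"
  shows "Uop X \<mu> s t f g \<in> borel_measurable (\<mu> (s + t))"
proof -
  have [measurable]: "(\<lambda>Z. f (head_part X s Z)) \<in> borel_measurable (\<mu> (s + t))"
    using measurable_compose[OF measurable_head_part_mu[OF st] f] .
  have [measurable]: "(\<lambda>Z. g (tail_part X s t Z)) \<in> borel_measurable (\<mu> (s + t))"
    using measurable_compose[OF measurable_tail_part_mu[OF st] g] .
  show ?thesis
    unfolding Uop_eq_head_tail_part[abs_def] by measurable
qed

lemma Uop_in_L2:
  assumes st: "0 < s" "0 < t" and f: "f \<in> L2 (\<mu> s)" and g: "g \<in> L2 (\<mu> t)"
  shows "Uop X \<mu> s t f g \<in> L2 (\<mu> (s + t))"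
proof -
  have "integrable (\<mu> s \<Otimes>\<^sub>M \<mu> t) (\<lambda>p. (cmod (f (fst p)))\<^sup>2 * (cmod (g (snd p)))\<^sup>2)"
    using pair_sigma_finite_mu[OF st] L2_integrable_norm_sq[OF f] L2_integrable_norm_sq[OF g]
    by (rule integrable_pair_measure_tensor)
  from integrable_Delta_decompose[OF st this]
  have "integrable (\<mu> (s + t)) (\<lambda>Z. (cmod (Uop X \<mu> s t f g Z))\<^sup>2)"
    by (simp add: Uop_eq_decompose norm_mult power_mult_distrib)
  moreover have "Uop X \<mu> s t f g \<in> borel_measurable (\<mu> (s + t))"
    using borel_measurable_Uop[OF st L2_borel_measurable[OF f] L2_borel_measurable[OF g]] .
  ultimately show ?thesis
    unfolding L2_def by simp
qed

lemma inner_L2_Uop: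
  assumes st: "0 < s" "0 < t" and f: "f \<in> L2 (\<mu> s)" "f' \<in> L2 (\<mu> s)" and g: "g \<in> L2 (\<mu> t)" "g' \<in> L2 (\<mu> t)"
  shows "inner_L2 (\<mu> (s + t)) (Uop X \<mu> s t f g) (Uop X \<mu> s t f' g') = inner_L2 (\<mu> s) f f' * inner_L2 (\<mu> t) g g'"
proof -
  define \<phi> where "\<phi> p = (cnj (f (fst p)) * f' (fst p)) * (cnj (g (snd p)) * g' (snd p))" for p
  note integrable_factors = pair_sigma_finite_mu[OF st] integrable_cnj_mult_L2[OF f] integrable_cnj_mult_L2[OF g]
  have "cnj (Uop X \<mu> s t f g Z) * Uop X \<mu> s t f' g' Z = enn2real (Delta X \<mu> s t Z) *\<^sub>R \<phi> (decompose X s t Z)" for Z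
  proof -
    have "complex_of_real (sqrt (enn2real (Delta X \<mu> s t Z))) * complex_of_real (sqrt (enn2real (Delta X \<mu> s t Z)))
        = complex_of_real (enn2real (Delta X \<mu> s t Z))"
      by (simp flip: of_real_mult)
    then show ?thesis
      unfolding Uop_eq_decompose \<phi>_def by (simp add: scaleR_conv_of_real algebra_simps)
  qed
  then have "inner_L2 (\<mu> (s + t)) (Uop X \<mu> s t f g) (Uop X \<mu> s t f' g')
      = (\<integral>Z. enn2real (Delta X \<mu> s t Z) *\<^sub>R \<phi> (decompose X s t Z) \<partial>\<mu> (s + t))"
    unfolding inner_L2_def by simp
  also have "\<dots> = (\<integral>p. \<phi> p \<partial>(\<mu> s \<Otimes>\<^sub>M \<mu> t))"
    unfolding \<phi>_def using integrable_pair_measure_tensor[OF integrable_factors]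
    by (rule integral_Delta_decompose[OF st])
  also have "\<dots> = inner_L2 (\<mu> s) f f' * inner_L2 (\<mu> t) g g'"
    unfolding \<phi>_def inner_L2_def by (rule integral_pair_measure_tensor[OF integrable_factors])
  finally show ?thesis .
qed

text \<open>\<open>Uop_inverse s t h\<close> is \<open>U\<^sub>s\<^sub>,\<^sub>t\<^sup>-\<^sup>1 h\<close>. Where \<open>\<Delta>\<^sub>s\<^sub>,\<^sub>t\<close> is \<open>0\<close> or \<open>\<infinity>\<close> the
  division returns \<open>0\<close>; this happens only on a null set.\<close>

definition Uop_inverse :: "real \<Rightarrow> real \<Rightarrow> ((real \<times> 'a) set \<Rightarrow> complex) \<Rightarrow> (real \<times> 'a) set \<times> (real \<times> 'a) set \<Rightarrow> complex"
  where "Uop_inverse s t h p =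
    h (oplus_pair s p) / complex_of_real (sqrt (enn2real (Delta X \<mu> s t (oplus_pair s p))))"

lemma Uop_inverse_decompose:
  "0 < s \<Longrightarrow> 0 < t \<Longrightarrow> Z \<in> space (\<mu> (s + t)) \<Longrightarrow>
    Uop_inverse s t h (decompose X s t Z) = h Z / complex_of_real (sqrt (enn2real (Delta X \<mu> s t Z)))"
  by (simp add: Uop_inverse_def oplus_pair_decompose)

lemma borel_measurable_Uop_inverse:
  assumes st: "0 < s" "0 < t" and [measurable]: "h \<in> borel_measurable (\<mu> (s + t))"
  shows "Uop_inverse s t h \<in> borel_measurable (\<mu> s \<Otimes>\<^sub>M \<mu> t)"
proof -
  note [measurable] = measurable_oplus_pair_mu[OF st]
  show ?thesis
    unfolding Uop_inverse_def[abs_def] by measurable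
qed

lemma nn_integral_Uop_inverse_le:
  assumes st: "0 < s" "0 < t" and h: "h \<in> borel_measurable (\<mu> (s + t))"
  shows "(\<integral>\<^sup>+p. ennreal ((cmod (Uop_inverse s t h p))\<^sup>2) \<partial>(\<mu> s \<Otimes>\<^sub>M \<mu> t))
    \<le> (\<integral>\<^sup>+Z. ennreal ((cmod (h Z))\<^sup>2) \<partial>\<mu> (s + t))"
proof -
  have "(\<integral>\<^sup>+p. ennreal ((cmod (Uop_inverse s t h p))\<^sup>2) \<partial>(\<mu> s \<Otimes>\<^sub>M \<mu> t))
      = (\<integral>\<^sup>+Z. Delta X \<mu> s t Z * ennreal ((cmod (Uop_inverse s t h (decompose X s t Z)))\<^sup>2) \<partial>\<mu> (s + t))"
    using borel_measurable_Uop_inverse[OF st h] by (intro nn_integral_Delta_decompose[symmetric, OF st]) measurable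
  also have "\<dots> \<le> (\<integral>\<^sup>+Z. ennreal ((cmod (h Z))\<^sup>2) \<partial>\<mu> (s + t))"
  proof (rule nn_integral_mono)
    fix Z assume Z: "Z \<in> space (\<mu> (s + t))"
    show "Delta X \<mu> s t Z * ennreal ((cmod (Uop_inverse s t h (decompose X s t Z)))\<^sup>2) \<le> ennreal ((cmod (h Z))\<^sup>2)"
    proof (cases "Delta X \<mu> s t Z" rule: ennreal_cases)
      case (real r)
      then have "r * (cmod (Uop_inverse s t h (decompose X s t Z)))\<^sup>2 \<le> (cmod (h Z))\<^sup>2"
        by (cases "r = 0") (simp_all add: Uop_inverse_decompose[OF st Z] norm_divide power_divide)
      then show ?thesis
        using real(1) by (simp add: real(2) flip: ennreal_mult)
    qed (simp add: Uop_inverse_decompose[OF st Z])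
  qed
  finally show ?thesis .
qed

lemma nn_integral_dist_Uop_inverse:
  assumes st: "0 < s" "0 < t" and h: "h \<in> borel_measurable (\<mu> (s + t))"
    and T: "T \<in> borel_measurable (\<mu> s \<Otimes>\<^sub>M \<mu> t)"
  shows "(\<integral>\<^sup>+Z. ennreal ((cmod (h Z - complex_of_real (sqrt (enn2real (Delta X \<mu> s t Z))) * T (decompose X s t Z)))\<^sup>2) \<partial>\<mu> (s + t))
    = (\<integral>\<^sup>+p. ennreal ((cmod (Uop_inverse s t h p - T p))\<^sup>2) \<partial>(\<mu> s \<Otimes>\<^sub>M \<mu> t))"
proof -
  have "AE Z in \<mu> (s + t).
      ennreal ((cmod (h Z - complex_of_real (sqrt (enn2real (Delta X \<mu> s t Z))) * T (decompose X s t Z)))\<^sup>2)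
      = Delta X \<mu> s t Z * ennreal ((cmod (Uop_inverse s t h (decompose X s t Z) - T (decompose X s t Z)))\<^sup>2)"
    using AE_Delta_finite[OF st] AE_Delta_nonzero[OF st] AE_space
  proof eventually_elim
    case (elim Z)
    then obtain r where r: "0 < r" "Delta X \<mu> s t Z = ennreal r"
      by (cases "Delta X \<mu> s t Z" rule: ennreal_cases) auto
    then have "h Z - complex_of_real (sqrt r) * T (decompose X s t Z)
        = complex_of_real (sqrt r) * (Uop_inverse s t h (decompose X s t Z) - T (decompose X s t Z))"
      by (simp add: Uop_inverse_decompose[OF st elim(3)] algebra_simps)
    then show ?case
      using r by (simp add: norm_mult power_mult_distrib ennreal_mult)
  qed
  then have "(\<integral>\<^sup>+Z. ennreal ((cmod (h Z - complex_of_real (sqrt (enn2real (Delta X \<mu> s t Z))) * T (decompose X s t Z)))\<^sup>2) \<partial>\<mu> (s + t))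
      = (\<integral>\<^sup>+Z. Delta X \<mu> s t Z * ennreal ((cmod (Uop_inverse s t h (decompose X s t Z) - T (decompose X s t Z)))\<^sup>2) \<partial>\<mu> (s + t))"
    by (rule nn_integral_cong_AE)
  also have "\<dots> = (\<integral>\<^sup>+p. ennreal ((cmod (Uop_inverse s t h p - T p))\<^sup>2) \<partial>(\<mu> s \<Otimes>\<^sub>M \<mu> t))"
    using borel_measurable_Uop_inverse[OF st h] T by (intro nn_integral_Delta_decompose[OF st]) measurable
  finally show ?thesis .
qed

lemma Uop_span_dense:
  assumes st: "0 < s" "0 < t" and h: "h \<in> L2 (\<mu> (s + t))" and "0 < \<epsilon>"
  shows "\<exists>n c F G. (\<forall>i<n. F i \<in> L2 (\<mu> s) \<and> G i \<in> L2 (\<mu> t)) \<and>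
           (\<integral>Z. (cmod (h Z - (\<Sum>i<(n::nat). c i * Uop X \<mu> s t (F i) (G i) Z)))\<^sup>2 \<partial>\<mu> (s + t)) < \<epsilon>"
proof -
  have h_meas: "h \<in> borel_measurable (\<mu> (s + t))"
    using h by (rule L2_borel_measurable)
  have "(\<integral>\<^sup>+Z. ennreal ((cmod (h Z))\<^sup>2) \<partial>\<mu> (s + t)) < \<infinity>"
    using nn_integral_eq_integral[OF L2_integrable_norm_sq[OF h]] by simp
  then have "tensor_approx (\<mu> s) (\<mu> t) (Uop_inverse s t h)"
    using nn_integral_Uop_inverse_le[OF st h_meas] prob_space_mu st
    by (intro tensor_approx_L2 borel_measurable_Uop_inverse[OF st h_meas])
      (simp_all add: prob_space_def)
  then obtain T where T: "T \<in> tensor_span (\<mu> s) (\<mu> t)"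
    "(\<integral>\<^sup>+p. ennreal ((cmod (Uop_inverse s t h p - T p))\<^sup>2) \<partial>(\<mu> s \<Otimes>\<^sub>M \<mu> t)) < ennreal \<epsilon>"
    using \<open>0 < \<epsilon>\<close> unfolding tensor_approx_def by blast
  obtain n c F G where FG: "\<forall>i<n. F i \<in> L2 (\<mu> s) \<and> G i \<in> L2 (\<mu> t)"
    and T_eq: "T = (\<lambda>p. \<Sum>i<(n::nat). c i * F i (fst p) * G i (snd p))"
    using tensor_span_eq_sum[OF T(1)] by blast
  define D where "D Z = (cmod (h Z - (\<Sum>i<n. c i * Uop X \<mu> s t (F i) (G i) Z)))\<^sup>2" for Z
  have "(\<Sum>i<n. c i * Uop X \<mu> s t (F i) (G i) Z)
      = complex_of_real (sqrt (enn2real (Delta X \<mu> s t Z))) * T (decompose X s t Z)" for Z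
    unfolding T_eq Uop_eq_decompose by (simp add: sum_distrib_left mult_ac)
  then have "(\<integral>\<^sup>+Z. ennreal (D Z) \<partial>\<mu> (s + t)) < ennreal \<epsilon>"
    using T nn_integral_dist_Uop_inverse[OF st h_meas tensor_span_measurable[OF T(1)]]
    by (simp add: D_def)
  then obtain q where q: "(\<integral>\<^sup>+Z. ennreal (D Z) \<partial>\<mu> (s + t)) = ennreal q" "0 \<le> q" "q < \<epsilon>"
    by (rule ennreal_less_ennrealE)
  have "(\<lambda>Z. \<Sum>i<n. c i * Uop X \<mu> s t (F i) (G i) Z) \<in> borel_measurable (\<mu> (s + t))"
  proof (rule borel_measurable_sum)
    fix i assume "i \<in> {..<n}"
    then have "Uop X \<mu> s t (F i) (G i) \<in> borel_measurable (\<mu> (s + t))"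
      using FG borel_measurable_Uop[OF st L2_borel_measurable L2_borel_measurable] by simp
    then show "(\<lambda>Z. c i * Uop X \<mu> s t (F i) (G i) Z) \<in> borel_measurable (\<mu> (s + t))"
      by measurable
  qed
  then have "D \<in> borel_measurable (\<mu> (s + t))"
    unfolding D_def using h_meas by measurable
  then have "(\<integral>Z. D Z \<partial>\<mu> (s + t)) = enn2real (\<integral>\<^sup>+Z. ennreal (D Z) \<partial>\<mu> (s + t))"
    by (rule integral_eq_nn_integral) (simp add: D_def)
  then have "(\<integral>Z. D Z \<partial>\<mu> (s + t)) < \<epsilon>"
    using q by simp
  then show ?thesis
    using FG unfolding D_def by blast
qed

lemma nn_integral_cocycle_left:
  assumes r: "0 < r" and s: "0 < s" and t: "0 < t" and A: "A \<in> sets (\<mu> (r + s + t))"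
  shows "(\<integral>\<^sup>+Z. Delta X \<mu> r (s + t) Z * Delta X \<mu> s t (tail_part X r (s + t) Z) * indicator A Z \<partial>\<mu> (r + s + t))
    = (\<integral>\<^sup>+a. \<integral>\<^sup>+b. \<integral>\<^sup>+c. indicator A (oplus r a (oplus s b c)) \<partial>\<mu> t \<partial>\<mu> s \<partial>\<mu> r)"
proof -
  have st: "0 < s + t"
    using s t by simp
  have rst: "\<mu> (r + (s + t)) = \<mu> (r + s + t)"
    by (simp add: add.assoc)
  have [measurable]: "A \<in> sets (\<mu> (r + (s + t)))"
    using A rst by simp
  note [measurable] = measurable_oplus_pair_mu[OF r st] measurable_oplus_pair_mu[OF s t]
  define \<phi> where "\<phi> p = Delta X \<mu> s t (snd p) * indicator A (oplus_pair r p)" for p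
  have \<phi>_meas: "\<phi> \<in> borel_measurable (\<mu> r \<Otimes>\<^sub>M \<mu> (s + t))"
    unfolding \<phi>_def by measurable
  have "(\<integral>\<^sup>+Z. Delta X \<mu> r (s + t) Z * Delta X \<mu> s t (tail_part X r (s + t) Z) * indicator A Z \<partial>\<mu> (r + s + t))
      = (\<integral>\<^sup>+Z. Delta X \<mu> r (s + t) Z * \<phi> (decompose X r (s + t) Z) \<partial>\<mu> (r + (s + t)))"
    unfolding rst by (intro nn_integral_cong)
      (simp add: \<phi>_def mult.assoc oplus_pair_decompose[OF r st, unfolded rst])
  also have "\<dots> = (\<integral>\<^sup>+a. \<integral>\<^sup>+w. \<phi> (a, w) \<partial>\<mu> (s + t) \<partial>\<mu> r)"
    using nn_integral_Delta_decompose[OF r st \<phi>_meas]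
      sigma_finite_measure.nn_integral_fst[OF sigma_finite_mu[OF st] \<phi>_meas] by simp
  also have "\<dots> = (\<integral>\<^sup>+a. \<integral>\<^sup>+b. \<integral>\<^sup>+c. indicator A (oplus r a (oplus s b c)) \<partial>\<mu> t \<partial>\<mu> s \<partial>\<mu> r)"
  proof (rule nn_integral_cong)
    fix a assume a: "a \<in> space (\<mu> r)"
    define \<psi> :: "_ \<Rightarrow> ennreal" where "\<psi> q = indicator A (oplus_pair r (a, oplus_pair s q))" for q
    have \<psi>_meas: "\<psi> \<in> borel_measurable (\<mu> s \<Otimes>\<^sub>M \<mu> t)"
      unfolding \<psi>_def using a by measurable
    have "(\<integral>\<^sup>+w. \<phi> (a, w) \<partial>\<mu> (s + t)) = (\<integral>\<^sup>+w. Delta X \<mu> s t w * \<psi> (decompose X s t w) \<partial>\<mu> (s + t))"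
      by (intro nn_integral_cong) (simp add: \<phi>_def \<psi>_def oplus_pair_decompose[OF s t])
    also have "\<dots> = (\<integral>\<^sup>+b. \<integral>\<^sup>+c. \<psi> (b, c) \<partial>\<mu> t \<partial>\<mu> s)"
      using nn_integral_Delta_decompose[OF s t \<psi>_meas]
        sigma_finite_measure.nn_integral_fst[OF sigma_finite_mu[OF t] \<psi>_meas] by simp
    finally show "(\<integral>\<^sup>+w. \<phi> (a, w) \<partial>\<mu> (s + t)) = (\<integral>\<^sup>+b. \<integral>\<^sup>+c. indicator A (oplus r a (oplus s b c)) \<partial>\<mu> t \<partial>\<mu> s)"
      by (simp add: \<psi>_def oplus_pair_apply)
  qed
  finally show ?thesis .
qed

lemma nn_integral_cocycle_right:
  assumes r: "0 < r" and s: "0 < s" and t: "0 < t" and [measurable]: "A \<in> sets (\<mu> (r + s + t))"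
  shows "(\<integral>\<^sup>+Z. Delta X \<mu> (r + s) t Z * Delta X \<mu> r s (head_part X (r + s) Z) * indicator A Z \<partial>\<mu> (r + s + t))
    = (\<integral>\<^sup>+a. \<integral>\<^sup>+b. \<integral>\<^sup>+c. indicator A (oplus r a (oplus s b c)) \<partial>\<mu> t \<partial>\<mu> s \<partial>\<mu> r)"
proof -
  have rs: "0 < r + s"
    using r s by simp
  note [measurable] = measurable_oplus_pair_mu[OF rs t] measurable_oplus_pair_mu[OF r s]
  define \<phi> where "\<phi> p = Delta X \<mu> r s (fst p) * indicator A (oplus_pair (r + s) p)" for p
  have \<phi>_meas: "\<phi> \<in> borel_measurable (\<mu> (r + s) \<Otimes>\<^sub>M \<mu> t)"
    unfolding \<phi>_def by measurable
  define f :: "_ \<Rightarrow> ennreal" where "f x = indicator A (oplus_pair (r + s) (oplus_pair r (fst x), snd x))" for x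
  have f_meas: "f \<in> borel_measurable ((\<mu> r \<Otimes>\<^sub>M \<mu> s) \<Otimes>\<^sub>M \<mu> t)"
    unfolding f_def by measurable
  have "(\<integral>\<^sup>+Z. Delta X \<mu> (r + s) t Z * Delta X \<mu> r s (head_part X (r + s) Z) * indicator A Z \<partial>\<mu> (r + s + t))
      = (\<integral>\<^sup>+Z. Delta X \<mu> (r + s) t Z * \<phi> (decompose X (r + s) t Z) \<partial>\<mu> (r + s + t))"
    by (intro nn_integral_cong) (simp add: \<phi>_def mult.assoc oplus_pair_decompose[OF rs t])
  also have "\<dots> = (\<integral>\<^sup>+c. \<integral>\<^sup>+v. \<phi> (v, c) \<partial>\<mu> (r + s) \<partial>\<mu> t)"
    using nn_integral_Delta_decompose[OF rs t \<phi>_meas]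
      pair_sigma_finite.nn_integral_snd[OF pair_sigma_finite_mu[OF rs t] \<phi>_meas] by simp
  also have "\<dots> = (\<integral>\<^sup>+c. \<integral>\<^sup>+q. f (q, c) \<partial>(\<mu> r \<Otimes>\<^sub>M \<mu> s) \<partial>\<mu> t)"
  proof (rule nn_integral_cong)
    fix c assume c: "c \<in> space (\<mu> t)"
    define \<psi> :: "_ \<Rightarrow> ennreal" where "\<psi> q = indicator A (oplus_pair (r + s) (oplus_pair r q, c))" for q
    have \<psi>_meas: "\<psi> \<in> borel_measurable (\<mu> r \<Otimes>\<^sub>M \<mu> s)"
      unfolding \<psi>_def using c by measurable
    have "(\<integral>\<^sup>+v. \<phi> (v, c) \<partial>\<mu> (r + s)) = (\<integral>\<^sup>+v. Delta X \<mu> r s v * \<psi> (decompose X r s v) \<partial>\<mu> (r + s))"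
      by (intro nn_integral_cong) (simp add: \<phi>_def \<psi>_def oplus_pair_decompose[OF r s])
    also have "\<dots> = (\<integral>\<^sup>+q. \<psi> q \<partial>(\<mu> r \<Otimes>\<^sub>M \<mu> s))"
      by (rule nn_integral_Delta_decompose[OF r s \<psi>_meas])
    finally show "(\<integral>\<^sup>+v. \<phi> (v, c) \<partial>\<mu> (r + s)) = (\<integral>\<^sup>+q. f (q, c) \<partial>(\<mu> r \<Otimes>\<^sub>M \<mu> s))"
      by (simp add: \<psi>_def f_def)
  qed
  also have "\<dots> = (\<integral>\<^sup>+q. \<integral>\<^sup>+c. f (q, c) \<partial>\<mu> t \<partial>(\<mu> r \<Otimes>\<^sub>M \<mu> s))"
    using pair_sigma_finite.nn_integral_snd[OF _ f_meas]
      sigma_finite_measure.nn_integral_fst[OF sigma_finite_mu[OF t] f_meas]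
    by (simp add: pair_sigma_finite_def prob_space_imp_sigma_finite prob_space_pair_mu[OF r s] sigma_finite_mu[OF t])
  also have "\<dots> = (\<integral>\<^sup>+a. \<integral>\<^sup>+b. \<integral>\<^sup>+c. f ((a, b), c) \<partial>\<mu> t \<partial>\<mu> s \<partial>\<mu> r)"
    using sigma_finite_measure.borel_measurable_nn_integral[OF sigma_finite_mu[OF t], of "\<lambda>q c. f (q, c)" "\<mu> r \<Otimes>\<^sub>M \<mu> s"] f_meas
    by (intro sigma_finite_measure.nn_integral_fst[OF sigma_finite_mu[OF s], symmetric]) simp
  also have "\<dots> = (\<integral>\<^sup>+a. \<integral>\<^sup>+b. \<integral>\<^sup>+c. indicator A (oplus r a (oplus s b c)) \<partial>\<mu> t \<partial>\<mu> s \<partial>\<mu> r)"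
    by (simp add: f_def oplus_pair_apply oplus_assoc)
  finally show ?thesis .
qed

text \<open>Both sides are densities of the image of \<open>\<mu>\<^sub>r \<otimes> \<mu>\<^sub>s \<otimes> \<mu>\<^sub>t\<close> under the triple concatenation.\<close>

lemma Delta_cocycle:
  assumes r: "0 < r" and s: "0 < s" and t: "0 < t"
  shows "AE Z in \<mu> (r + s + t). Delta X \<mu> r (s + t) Z * Delta X \<mu> s t (tail_part X r (s + t) Z)
                              = Delta X \<mu> (r + s) t Z * Delta X \<mu> r s (head_part X (r + s) Z)"
proof -
  let ?M = "\<mu> (r + s + t)"
  define \<rho>1 where "\<rho>1 Z = Delta X \<mu> r (s + t) Z * Delta X \<mu> s t (tail_part X r (s + t) Z)" for Z
  define \<rho>2 where "\<rho>2 Z = Delta X \<mu> (r + s) t Z * Delta X \<mu> r s (head_part X (r + s) Z)" for Z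
  have st: "0 < s + t" and rs: "0 < r + s"
    using r s t by simp_all
  have rst: "\<mu> (r + (s + t)) = ?M"
    by (simp add: add.assoc)
  note [measurable] = measurable_tail_part_mu[OF r st, unfolded rst] measurable_head_part_mu[OF rs t]
  have [measurable]: "Delta X \<mu> r (s + t) \<in> borel_measurable ?M"
    using borel_measurable_Delta[of r "s + t"] rst by simp
  have \<rho>1_meas: "\<rho>1 \<in> borel_measurable ?M" and \<rho>2_meas: "\<rho>2 \<in> borel_measurable ?M"
    unfolding \<rho>1_def \<rho>2_def by measurable
  have "density ?M \<rho>1 = density ?M \<rho>2"
  proof (rule measure_eqI)
    fix A assume "A \<in> sets (density ?M \<rho>1)"
    then have A: "A \<in> sets ?M"
      by simp
    show "emeasure (density ?M \<rho>1) A = emeasure (density ?M \<rho>2) A"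
      using nn_integral_cocycle_left[OF r s t A] nn_integral_cocycle_right[OF r s t A]
      by (simp add: emeasure_density[OF \<rho>1_meas A] emeasure_density[OF \<rho>2_meas A] \<rho>1_def \<rho>2_def)
  qed simp
  moreover have "integral\<^sup>N ?M \<rho>1 \<noteq> \<infinity>"
  proof -
    have "integral\<^sup>N ?M \<rho>1 = (\<integral>\<^sup>+Z. \<rho>1 Z * indicator (space ?M) Z \<partial>?M)"
      by (intro nn_integral_cong) simp
    also have "\<dots> \<le> 1"
      unfolding \<rho>1_def nn_integral_cocycle_left[OF r s t sets.top]
      using prob_space_mu r s t by (intro nn_integral_le_1) (simp_all split: split_indicator)
    finally show ?thesis
      by (auto simp: top_unique)
  qed
  ultimately have "AE Z in ?M. \<rho>1 Z = \<rho>2 Z"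
    using finite_density_unique[OF \<rho>1_meas \<rho>2_meas] by simp
  then show ?thesis
    unfolding \<rho>1_def \<rho>2_def .
qed

lemma Uop_assoc:
  assumes r: "0 < r" and s: "0 < s" and t: "0 < t"
  shows "AE Z in \<mu> (r + s + t). Uop X \<mu> r (s + t) f (Uop X \<mu> s t g h) Z = Uop X \<mu> (r + s) t (Uop X \<mu> r s f g) h Z"
  using Delta_cocycle[OF r s t]
proof eventually_elim
  case (elim Z)
  let ?W = "tail_part X r (s + t) Z" and ?V = "head_part X (r + s) Z"
  let ?S = "\<lambda>x. complex_of_real (sqrt (enn2real x))"
  have "?S (Delta X \<mu> r (s + t) Z) * ?S (Delta X \<mu> s t ?W) = ?S (Delta X \<mu> (r + s) t Z) * ?S (Delta X \<mu> r s ?V)"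
    using elim by (simp flip: of_real_mult sqrt_enn2real_mult)
  moreover have "head_part X r ?V = head_part X r Z" "head_part X s ?W = tail_part X r s ?V"
    "tail_part X s t ?W = tail_part X (r + s) t Z"
    using head_part_head_part[of s X r Z] head_part_tail_part[of r s t X Z] tail_part_tail_part[of s X t r Z] r s t
    by simp_all
  ultimately show ?case
    unfolding Uop_eq_head_tail_part by (simp add: mult_ac)
qed

end

theorem proposition2p10:
  fixes X :: "'a topology" and \<mu> :: "real \<Rightarrow> (real \<times> 'a) set measure"
  assumes "locally_compact_space X" and "second_countable X" and "Hausdorff_space X"
    and "factorizing_family X \<mu>"
  shows
    "(\<forall>s>0. \<forall>t>0.
        (\<forall>f\<in>L2 (\<mu> s). \<forall>g\<in>L2 (\<mu> t). Uop X \<mu> s t f g \<in> L2 (\<mu> (s + t))) \<and>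
        (\<forall>f\<in>L2 (\<mu> s). \<forall>f'\<in>L2 (\<mu> s). \<forall>g\<in>L2 (\<mu> t). \<forall>g'\<in>L2 (\<mu> t).
           inner_L2 (\<mu> (s + t)) (Uop X \<mu> s t f g) (Uop X \<mu> s t f' g')
             = inner_L2 (\<mu> s) f f' * inner_L2 (\<mu> t) g g') \<and>
        (\<forall>h\<in>L2 (\<mu> (s + t)). \<forall>\<epsilon>>0. \<exists>n c F G.
           (\<forall>i<n. F i \<in> L2 (\<mu> s) \<and> G i \<in> L2 (\<mu> t)) \<and>
           (\<integral>Z. (cmod (h Z - (\<Sum>i<(n::nat). c i * Uop X \<mu> s t (F i) (G i) Z)))\<^sup>2 \<partial>\<mu> (s + t)) < \<epsilon>))
     \<and>
     (\<forall>r>0. \<forall>s>0. \<forall>t>0. \<forall>f\<in>L2 (\<mu> r). \<forall>g\<in>L2 (\<mu> s). \<forall>h\<in>L2 (\<mu> t).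
        (AE Z in \<mu> (r + s + t).
           Uop X \<mu> r (s + t) f (Uop X \<mu> s t g h) Z = Uop X \<mu> (r + s) t (Uop X \<mu> r s f g) h Z))"
proof -
  interpret factorizing X \<mu>
    using assms by unfold_locales
  show ?thesis
    by (auto intro: Uop_in_L2 inner_L2_Uop Uop_span_dense Uop_assoc)
qed

end
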